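(* Let $(\Omega,\mathcal F)$ be a measurable space and $\mathcal P$ a Hahn-localizable family of probability measures on $\mathcal F$ (not necessarily convex). Then $\mathrm{ca}(\mathrm{co}(\mathcal P))'$ is isometrically isomorphic to $\mathbb L^\infty(\mathcal P)$.
   Context: $\mathrm{co}(\mathcal P)$ is the convex hull of $\mathcal P$. A set is $\mathcal P$-polar if it is contained in some $N\in\mathcal F$ with $P(N)=0$ for all $P\in\mathcal P$; $\mathcal P$-q.s. means outside a $\mathcal P$-polar set. $\mathbb L^\infty(\mathcal P)$ is the space of $\mathcal F$-measurable real functions bounded $\mathcal P$-q.s., modulo $\mathcal P$-q.s. equality, with norm $\|f\|=\inf\{M>0:|f|\le M\ \mathcal P\text{-q.s.}\}$. For a family $\mathcal R$, $\mathrm{ca}(\mathcal R)$ is the set of finite signed measures $\mu$ on $\mathcal F$ with $|\mu|\ll R$ for some $R\in\mathcal R$, with the total variation norm. For families $\mathcal P,\mathcal Q$, $\mathcal P\lll\mathcal Q$ means every $P\in\mathcal P$ satisfies $P\ll Q$ for some $Q\in\mathcal Q$; $\mathrm{sconv}(\mathcal Q)$ is the set of countable convex combinations of elements of $\mathcal Q$. $\mathcal P$ is pre-Hahn-localizable if there are a family $\mathcal Q$ of probability measures on $\mathcal F$ and sets $S_Q\in\mathcal F$ with $Q(S_R)=\delta_{QR}$ ($Q,R\in\mathcal Q$) and $\mathcal Q\lll\mathcal P\lll\mathrm{sconv}(\mathcal Q)$; it is Hahn-localizable if moreover this can be arranged so that for every family $E_Q\in\mathcal F$, $E_Q\subseteq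 S_Q$, there is $S\in\mathcal F$ with $Q(E_Q\setminus S)=0$ for all $Q\in\mathcal Q$, and such that any $F\in\mathcal F$ with $Q(E_Q\setminus F)=0$ for all $Q$ satisfies $Q(S\setminus F)=0$ for all $Q\in\mathcal Q$. *)

theory Defs
  imports "HOL-Analysis.Analysis"
begin

text \<open>Measures are represented as real-valued set functions on the measurable
space M (only sets M and space M are used); they vanish outside sets M.\<close>

definition signed_measure :: "'a measure \<Rightarrow> ('a set \<Rightarrow> real) \<Rightarrow> bool" where
  "signed_measure M \<mu> \<longleftrightarrow>
     (\<forall>A. A \<notin> sets M \<longrightarrow> \<mu> A = 0) \<and>
     (\<forall>A::nat \<Rightarrow> 'a set. disjoint_family A \<longrightarrow> range A \<subseteq> sets M \<longrightarrow>
        (\<lambda>n. \<mu> (A n)) sums \<mu> (\<Union>n. A n))"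

definition prob_measure :: "'a measure \<Rightarrow> ('a set \<Rightarrow> real) \<Rightarrow> bool" where
  "prob_measure M \<mu> \<longleftrightarrow> signed_measure M \<mu> \<and> (\<forall>A\<in>sets M. 0 \<le> \<mu> A) \<and> \<mu> (space M) = 1"

text \<open>\<open>|\<mu>| \<ll> R\<close>: the total variation of \<mu> vanishes on R-null sets,
i.e. \<mu> vanishes on all measurable subsets of R-null sets.\<close>
definition abs_cont :: "'a measure \<Rightarrow> ('a set \<Rightarrow> real) \<Rightarrow> ('a set \<Rightarrow> real) \<Rightarrow> bool" where
  "abs_cont M \<mu> R \<longleftrightarrow> (\<forall>A\<in>sets M. R A = 0 \<longrightarrow> (\<forall>B\<in>sets M. B \<subseteq> A \<longrightarrow> \<mu> B = 0))"

definition tv_norm :: "'a measure \<Rightarrow> ('a set \<Rightarrow> real) \<Rightarrow> real" where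
  "tv_norm M \<mu> = Sup {(\<Sum>A\<in>\<A>. \<bar>\<mu> A\<bar>) | \<A>. finite \<A> \<and> \<A> \<subseteq> sets M \<and> disjoint \<A>}"

definition dominated :: "'a measure \<Rightarrow> ('a set \<Rightarrow> real) set \<Rightarrow> ('a set \<Rightarrow> real) set \<Rightarrow> bool" where
  "dominated M \<P> \<Q> \<longleftrightarrow> (\<forall>P\<in>\<P>. \<exists>Q\<in>\<Q>. abs_cont M P Q)"

definition mconv :: "('a set \<Rightarrow> real) set \<Rightarrow> ('a set \<Rightarrow> real) set" where
  "mconv \<P> = {(\<lambda>A. \<Sum>i<n. c i * p i A) | (n::nat) c p.
             (\<forall>i<n. 0 \<le> c i \<and> p i \<in> \<P>) \<and> (\<Sum>i<n. c i) = 1}"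

definition sconv :: "('a set \<Rightarrow> real) set \<Rightarrow> ('a set \<Rightarrow> real) set" where
  "sconv \<Q> = {(\<lambda>A. \<Sum>i. c i * q i A) | c q.
             (\<forall>i. 0 \<le> c i \<and> q i \<in> \<Q>) \<and> c sums 1}"

definition hahn_localizable :: "'a measure \<Rightarrow> ('a set \<Rightarrow> real) set \<Rightarrow> bool" where
  "hahn_localizable M \<P> \<longleftrightarrow>
    (\<exists>\<Q> S. (\<forall>Q\<in>\<Q>. prob_measure M Q) \<and> (\<forall>Q\<in>\<Q>. S Q \<in> sets M) \<and>
       (\<forall>Q\<in>\<Q>. \<forall>R\<in>\<Q>. Q (S R) = (if Q = R then 1 else 0)) \<and>
       dominated M \<Q> \<P> \<and> dominated M \<P> (sconv \<Q>) \<and>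
       (\<forall>E. (\<forall>Q\<in>\<Q>. E Q \<in> sets M \<and> E Q \<subseteq> S Q) \<longrightarrow>
          (\<exists>S'\<in>sets M. (\<forall>Q\<in>\<Q>. Q (E Q - S') = 0) \<and>
             (\<forall>F\<in>sets M. (\<forall>Q\<in>\<Q>. Q (E Q - F) = 0) \<longrightarrow> (\<forall>Q\<in>\<Q>. Q (S' - F) = 0)))))"

definition qs :: "'a measure \<Rightarrow> ('a set \<Rightarrow> real) set \<Rightarrow> ('a \<Rightarrow> bool) \<Rightarrow> bool" where
  "qs M \<P> \<phi> \<longleftrightarrow> (\<exists>N\<in>sets M. (\<forall>P\<in>\<P>. P N = 0) \<and> {x\<in>space M. \<not> \<phi> x} \<subseteq> N)"

text \<open>Representatives of elements of \<open>L\<^sup>\<infinity>(\<P>)\<close> and the norm.\<close>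
definition Linf :: "'a measure \<Rightarrow> ('a set \<Rightarrow> real) set \<Rightarrow> ('a \<Rightarrow> real) set" where
  "Linf M \<P> = {f. f \<in> borel_measurable M \<and> (\<exists>C. qs M \<P> (\<lambda>x. \<bar>f x\<bar> \<le> C))}"

definition Linf_norm :: "'a measure \<Rightarrow> ('a set \<Rightarrow> real) set \<Rightarrow> ('a \<Rightarrow> real) \<Rightarrow> real" where
  "Linf_norm M \<P> f = Inf {C. 0 < C \<and> qs M \<P> (\<lambda>x. \<bar>f x\<bar> \<le> C)}"

definition ca :: "'a measure \<Rightarrow> ('a set \<Rightarrow> real) set \<Rightarrow> ('a set \<Rightarrow> real) set" where
  "ca M \<R> = {\<mu>. signed_measure M \<mu> \<and> (\<exists>R\<in>\<R>. abs_cont M \<mu> R)}"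

definition ca_dual :: "'a measure \<Rightarrow> ('a set \<Rightarrow> real) set \<Rightarrow> (('a set \<Rightarrow> real) \<Rightarrow> real) \<Rightarrow> bool" where
  "ca_dual M \<R> \<Lambda> \<longleftrightarrow>
     (\<forall>\<mu>\<in>ca M \<R>. \<forall>\<nu>\<in>ca M \<R>. \<forall>a b. \<Lambda> (\<lambda>A. a * \<mu> A + b * \<nu> A) = a * \<Lambda> \<mu> + b * \<Lambda> \<nu>) \<and>
     (\<exists>C. \<forall>\<mu>\<in>ca M \<R>. \<bar>\<Lambda> \<mu>\<bar> \<le> C * tv_norm M \<mu>)"

definition dual_norm :: "'a measure \<Rightarrow> ('a set \<Rightarrow> real) set \<Rightarrow> (('a set \<Rightarrow> real) \<Rightarrow> real) \<Rightarrow> real" where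
  "dual_norm M \<R> \<Lambda> = Inf {C. 0 \<le> C \<and> (\<forall>\<mu>\<in>ca M \<R>. \<bar>\<Lambda> \<mu>\<bar> \<le> C * tv_norm M \<mu>)}"

end

theory Submission
  imports Defs
begin

text \<open>\<open>\<Phi> f \<mu>\<close> is the integral of \<open>f\<close> against the Jordan decomposition of \<open>\<mu>\<close>. Every
  \<open>\<mu> \<in> ca(co \<P>)\<close> has a Radon-Nikodym density \<open>h\<close> with respect to some \<open>R \<in> co \<P>\<close>, and
  \<open>\<Phi> f \<mu> = \<integral> h f dR\<close>; this gives linearity and \<open>|\<Phi> f \<mu>| \<le> \<parallel>f\<parallel> \<parallel>\<mu>\<parallel>\<close>. Testing with the measures
  \<open>1\<^sub>D P\<close>, \<open>P \<in> \<P>\<close>, turns bounds on \<open>\<Phi> f\<close> into quasi-sure bounds on \<open>f\<close>, which yields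
  injectivity and the isometry.

  For surjectivity, a functional \<open>\<Lambda>\<close> restricted to the measures \<open>h Q\<close>, \<open>h \<in> L\<^sup>1(Q)\<close>, is a
  bounded functional on \<open>L\<^sup>1(Q)\<close>, hence integration against some \<open>g\<^sub>Q\<close> with
  \<open>|g\<^sub>Q| \<le> \<parallel>\<Lambda>\<parallel>\<close>. Hahn-localizability glues the \<open>g\<^sub>Q\<close>, each taken on its own set \<open>S Q\<close>, into
  one \<open>f\<close>: the superlevel sets of \<open>f\<close> are the essential unions of those of the \<open>g\<^sub>Q\<close>. Every
  \<open>\<mu>\<close> lives on countably many of the sets \<open>S Q\<close>; on each of them \<open>\<Lambda>\<close> and \<open>\<Phi> f\<close> agree, and
  since \<open>\<Lambda> - \<Phi> f\<close> is bounded by the total variation, the pieces add up.\<close>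

lemma signed_measure_notin_sets: "signed_measure M \<mu> \<Longrightarrow> A \<notin> sets M \<Longrightarrow> \<mu> A = 0"
  unfolding signed_measure_def by auto

lemma signed_measure_sums:
  "signed_measure M \<mu> \<Longrightarrow> disjoint_family A \<Longrightarrow> range A \<subseteq> sets M \<Longrightarrow>
    (\<lambda>n. \<mu> (A n)) sums \<mu> (\<Union>n. A n)"
  unfolding signed_measure_def by auto

lemma signed_measure_empty:
  assumes "signed_measure M \<mu>" shows "\<mu> {} = 0"
proof -
  have "(\<lambda>n::nat. \<mu> {}) sums \<mu> {}"
    using signed_measure_sums[OF assms, of "\<lambda>_. {}"] by (simp add: disjoint_family_on_def)
  hence "(\<lambda>n::nat. \<mu> {}) \<longlonglongrightarrow> 0" using summable_LIMSEQ_zero sums_summable by blast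
  thus ?thesis using LIMSEQ_const_iff by blast
qed

lemma signed_measure_Un:
  assumes "signed_measure M \<mu>" "A \<in> sets M" "B \<in> sets M" "A \<inter> B = {}"
  shows "\<mu> (A \<union> B) = \<mu> A + \<mu> B"
proof -
  have "(\<lambda>n. \<mu> (binaryset A B n)) sums \<mu> (\<Union>n. binaryset A B n)"
    using assms by (intro signed_measure_sums[OF assms(1)]) (auto simp: disjoint_family_on_def binaryset_def)
  moreover have "(\<lambda>n. \<mu> (binaryset A B n)) sums (\<mu> A + \<mu> B)"
    by (rule binaryset_sums) (rule signed_measure_empty[OF assms(1)])
  ultimately show ?thesis using sums_unique2 UN_binaryset_eq by metis
qed

lemma signed_measure_Diff:
  assumes "signed_measure M \<mu>" "A \<in> sets M" "B \<in> sets M" "B \<subseteq> A"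
  shows "\<mu> (A - B) = \<mu> A - \<mu> B"
proof -
  have "\<mu> ((A - B) \<union> B) = \<mu> (A - B) + \<mu> B"
    using assms by (intro signed_measure_Un[OF assms(1)]) auto
  thus ?thesis using assms(4) by (simp add: Un_absorb2)
qed

lemma signed_measure_UN_lessThan:
  fixes n :: nat
  assumes "signed_measure M \<mu>" "\<And>i. A i \<in> sets M" "disjoint_family A"
  shows "\<mu> (\<Union>i<n. A i) = (\<Sum>i<n. \<mu> (A i))"
proof (induction n)
  case 0 then show ?case using signed_measure_empty[OF assms(1)] by simp
next
  case (Suc n)
  have "A i \<inter> A n = {}" if "i < n" for i
    using assms(3) that unfolding disjoint_family_on_def by simp
  hence "(\<Union>i<n. A i) \<inter> A n = {}" by blast
  hence "\<mu> ((\<Union>i<n. A i) \<union> A n) = \<mu> (\<Union>i<n. A i) + \<mu> (A n)"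
    using assms by (intro signed_measure_Un[OF assms(1)]) auto
  thus ?case using Suc.IH by (simp add: lessThan_Suc Un_commute)
qed

lemma signed_measure_lin:
  assumes "signed_measure M \<mu>" "signed_measure M \<nu>"
  shows "signed_measure M (\<lambda>A. a * \<mu> A + b * \<nu> A)"
  unfolding signed_measure_def
proof safe
  fix A :: "nat \<Rightarrow> _" assume "disjoint_family A" "range A \<subseteq> sets M"
  thus "(\<lambda>n. a * \<mu> (A n) + b * \<nu> (A n)) sums (a * \<mu> (\<Union> (range A)) + b * \<nu> (\<Union> (range A)))"
    using signed_measure_sums[OF assms(1)] signed_measure_sums[OF assms(2)]
    by (intro sums_add sums_mult) auto
next
  fix A assume "A \<notin> sets M"
  thus "a * \<mu> A + b * \<nu> A = 0"
    using signed_measure_notin_sets[OF assms(1)] signed_measure_notin_sets[OF assms(2)] by simp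
qed

lemma signed_measure_sum:
  fixes n :: nat
  assumes "\<And>i. i < n \<Longrightarrow> signed_measure M (\<mu> i)"
  shows "signed_measure M (\<lambda>A. \<Sum>i<n. c i * \<mu> i A)"
  using assms
proof (induction n)
  case 0 thus ?case by (simp add: signed_measure_def)
next
  case (Suc n)
  have "signed_measure M (\<lambda>A. 1 * (\<Sum>i<n. c i * \<mu> i A) + c n * \<mu> n A)"
    using Suc by (intro signed_measure_lin) auto
  thus ?case by simp
qed

lemma signed_measure_split_unbounded:
  assumes sm: "signed_measure M \<mu>" and A: "A \<in> sets M"
    and unb: "\<forall>C. \<exists>B\<in>sets M. B \<subseteq> A \<and> C < \<bar>\<mu> B\<bar>"
  obtains B where "B \<in> sets M" "B \<subseteq> A" "1 \<le> \<bar>\<mu> B\<bar>" "\<forall>C. \<exists>B'\<in>sets M. B' \<subseteq> A - B \<and> C < \<bar>\<mu> B'\<bar>"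
proof -
  obtain B where B: "B \<in> sets M" "B \<subseteq> A" "\<bar>\<mu> A\<bar> + 1 < \<bar>\<mu> B\<bar>" using unb by blast
  show ?thesis
  proof (cases "\<forall>C. \<exists>B'\<in>sets M. B' \<subseteq> A - B \<and> C < \<bar>\<mu> B'\<bar>")
    case True thus ?thesis using that B by simp
  next
    case False
    then obtain C0 where C0: "\<And>D. D \<in> sets M \<Longrightarrow> D \<subseteq> A - B \<Longrightarrow> \<bar>\<mu> D\<bar> \<le> C0"
      by (auto simp: not_less)
    have "\<exists>B'\<in>sets M. B' \<subseteq> A - (A - B) \<and> C < \<bar>\<mu> B'\<bar>" for C
    proof -
      obtain D where D: "D \<in> sets M" "D \<subseteq> A" "C + C0 < \<bar>\<mu> D\<bar>" using unb by blast
      have "D = (D \<inter> B) \<union> (D - B)" by auto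
      hence "\<mu> D = \<mu> (D \<inter> B) + \<mu> (D - B)"
        using signed_measure_Un[OF sm, of "D \<inter> B" "D - B"] D(1) B(1) by auto
      moreover have "\<bar>\<mu> (D - B)\<bar> \<le> C0" using C0[of "D - B"] D B by auto
      ultimately have "C < \<bar>\<mu> (D \<inter> B)\<bar>" using D by linarith
      thus ?thesis using D B by (intro bexI[of _ "D \<inter> B"]) auto
    qed
    moreover have "1 \<le> \<bar>\<mu> (A - B)\<bar>" using signed_measure_Diff[OF sm A B(1,2)] B by linarith
    ultimately show ?thesis using that[of "A - B"] A B by auto
  qed
qed

text \<open>Splitting off, again and again, a piece of variation at least 1 while keeping the
  remainder unbounded would produce a disjoint family whose measures do not tend to 0.\<close>

lemma signed_measure_bounded:
  assumes sm: "signed_measure M \<mu>" shows "\<exists>C. \<forall>A\<in>sets M. \<bar>\<mu> A\<bar> \<le> C"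
proof (rule ccontr)
  define unb where "unb A \<longleftrightarrow> (\<forall>C. \<exists>B\<in>sets M. B \<subseteq> A \<and> C < \<bar>\<mu> B\<bar>)" for A
  assume "\<not> (\<exists>C. \<forall>A\<in>sets M. \<bar>\<mu> A\<bar> \<le> C)"
  hence unb_space: "unb (space M)"
    unfolding unb_def using sets.sets_into_space by (metis not_le)
  define nxt where "nxt A = (SOME B. B \<in> sets M \<and> B \<subseteq> A \<and> 1 \<le> \<bar>\<mu> B\<bar> \<and> unb (A - B))" for A
  have nxt: "nxt A \<in> sets M \<and> nxt A \<subseteq> A \<and> 1 \<le> \<bar>\<mu> (nxt A)\<bar> \<and> unb (A - nxt A)"
    if "A \<in> sets M" "unb A" for A
    unfolding nxt_def
    by (rule someI_ex, rule signed_measure_split_unbounded[OF sm that(1) that(2)[unfolded unb_def]])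
       (auto simp: unb_def)
  define rest where "rest n = rec_nat (space M) (\<lambda>_ A. A - nxt A) n" for n
  have rest_0: "rest 0 = space M" and rest_Suc: "rest (Suc n) = rest n - nxt (rest n)" for n
    by (simp_all add: rest_def)
  have rest: "rest n \<in> sets M \<and> unb (rest n)" for n
  proof (induction n)
    case 0 thus ?case using unb_space by (simp add: rest_0)
  next
    case (Suc n) thus ?case using nxt[of "rest n"] by (auto simp: rest_Suc)
  qed
  define B where "B n = nxt (rest n)" for n
  have B: "B n \<in> sets M" "B n \<subseteq> rest n" "1 \<le> \<bar>\<mu> (B n)\<bar>" for n
    using nxt rest unfolding B_def by auto
  have rest_mono: "rest n \<subseteq> rest m" if "m \<le> n" for m n
    using that by (induction rule: dec_induct) (auto simp: rest_Suc)
  have "disjoint_family B"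
    unfolding disjoint_family_on_def
  proof (intro ballI impI)
    fix m n :: nat assume "m \<noteq> n"
    have "B n \<inter> B m = {}" if "m < n" for m n
    proof -
      have "B n \<subseteq> rest (Suc m)" using rest_mono[of "Suc m" n] B(2)[of n] that by auto
      thus ?thesis using rest_Suc[of m] B_def by auto
    qed
    thus "B m \<inter> B n = {}" using \<open>m \<noteq> n\<close> by (metis Int_commute nat_neq_iff)
  qed
  hence "(\<lambda>n. \<mu> (B n)) sums \<mu> (\<Union>n. B n)" using signed_measure_sums[OF sm] B(1) by blast
  hence "(\<lambda>n. \<mu> (B n)) \<longlonglongrightarrow> 0" using summable_LIMSEQ_zero sums_summable by blast
  hence "eventually (\<lambda>n. dist (\<mu> (B n)) 0 < 1) sequentially" by (rule tendstoD) simp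
  then obtain n where "\<bar>\<mu> (B n)\<bar> < 1" by (auto simp: eventually_sequentially dist_real_def)
  thus False using B(3)[of n] by simp
qed

definition pos_measure :: "'a measure \<Rightarrow> ('a set \<Rightarrow> real) \<Rightarrow> bool" where
  "pos_measure M \<rho> \<longleftrightarrow> signed_measure M \<rho> \<and> (\<forall>A\<in>sets M. 0 \<le> \<rho> A)"

definition to_measure :: "'a measure \<Rightarrow> ('a set \<Rightarrow> real) \<Rightarrow> 'a measure" where
  "to_measure M \<rho> = measure_of (space M) (sets M) (\<lambda>A. ennreal (\<rho> A))"

lemma pos_measure_signed: "pos_measure M \<rho> \<Longrightarrow> signed_measure M \<rho>"
  unfolding pos_measure_def by auto

lemma pos_measure_nonneg: "pos_measure M \<rho> \<Longrightarrow> 0 \<le> \<rho> A"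
  unfolding pos_measure_def signed_measure_def by (cases "A \<in> sets M") auto

lemma pos_measure_mono:
  "pos_measure M \<rho> \<Longrightarrow> A \<in> sets M \<Longrightarrow> B \<in> sets M \<Longrightarrow> A \<subseteq> B \<Longrightarrow> \<rho> A \<le> \<rho> B"
  using signed_measure_Diff[OF pos_measure_signed, of M \<rho> B A] pos_measure_nonneg[of M \<rho> "B - A"]
  by auto

lemma pos_measure_null_subset:
  "pos_measure M \<rho> \<Longrightarrow> A \<in> sets M \<Longrightarrow> B \<in> sets M \<Longrightarrow> B \<subseteq> A \<Longrightarrow> \<rho> A = 0 \<Longrightarrow> \<rho> B = 0"
  using pos_measure_mono[of M \<rho> B A] pos_measure_nonneg[of M \<rho> B] by simp

lemma pos_measure_lin:
  "pos_measure M \<rho> \<Longrightarrow> pos_measure M \<sigma> \<Longrightarrow> 0 \<le> a \<Longrightarrow> 0 \<le> b \<Longrightarrow>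
    pos_measure M (\<lambda>A. a * \<rho> A + b * \<sigma> A)"
  using signed_measure_lin[of M \<rho> \<sigma> a b] unfolding pos_measure_def by auto

lemma pos_measure_add: "pos_measure M \<rho> \<Longrightarrow> pos_measure M \<sigma> \<Longrightarrow> pos_measure M (\<lambda>A. \<rho> A + \<sigma> A)"
  using pos_measure_lin[of M \<rho> \<sigma> 1 1] by simp

lemma prob_measure_pos: "prob_measure M P \<Longrightarrow> pos_measure M P"
  unfolding prob_measure_def pos_measure_def by auto

lemma sets_to_measure[simp, measurable_cong]: "sets (to_measure M \<rho>) = sets M"
  unfolding to_measure_def by simp

lemma space_to_measure[simp]: "space (to_measure M \<rho>) = space M"
  unfolding to_measure_def by simp

lemma measurable_from_to_measure[simp]: "measurable (to_measure M \<rho>) N = measurable M N"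
  by (intro measurable_cong_sets) auto

lemma measurable_into_to_measure[simp]: "measurable N (to_measure M \<rho>) = measurable N M"
  by (intro measurable_cong_sets) auto

lemma emeasure_to_measure:
  assumes "pos_measure M \<rho>" "A \<in> sets M"
  shows "emeasure (to_measure M \<rho>) A = ennreal (\<rho> A)"
  unfolding to_measure_def
proof (rule emeasure_measure_of_sigma)
  show "sigma_algebra (space M) (sets M)" by (rule sets.sigma_algebra_axioms)
  show "positive (sets M) (\<lambda>A. ennreal (\<rho> A))"
    using signed_measure_empty[OF pos_measure_signed[OF assms(1)]] by (auto simp: positive_def)
  show "countably_additive (sets M) (\<lambda>A. ennreal (\<rho> A))"
    unfolding countably_additive_def
  proof safe
    fix A :: "nat \<Rightarrow> _" assume "range A \<subseteq> sets M" "disjoint_family A"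
    hence S: "(\<lambda>n. \<rho> (A n)) sums \<rho> (\<Union>n. A n)"
      using signed_measure_sums[OF pos_measure_signed[OF assms(1)]] by blast
    show "(\<Sum>i. ennreal (\<rho> (A i))) = ennreal (\<rho> (\<Union> (range A)))"
      using suminf_ennreal_eq[of "\<lambda>n. \<rho> (A n)", OF _ S] pos_measure_nonneg[OF assms(1)] by blast
  qed
qed fact

lemma measure_to_measure:
  assumes "pos_measure M \<rho>" shows "measure (to_measure M \<rho>) A = \<rho> A"
proof (cases "A \<in> sets M")
  case True thus ?thesis using emeasure_to_measure[OF assms True] pos_measure_nonneg[OF assms]
    by (simp add: measure_def)
next
  case False thus ?thesis
    using signed_measure_notin_sets[OF pos_measure_signed[OF assms]] by (metis measure_notin_sets sets_to_measure)
qed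

lemma finite_measure_to_measure:
  assumes "pos_measure M \<rho>" shows "finite_measure (to_measure M \<rho>)"
  using emeasure_to_measure[OF assms sets.top] by (intro finite_measureI) simp

lemma null_sets_to_measure:
  assumes "pos_measure M \<rho>" shows "A \<in> null_sets (to_measure M \<rho>) \<longleftrightarrow> A \<in> sets M \<and> \<rho> A = 0"
  using emeasure_to_measure[OF assms, of A] pos_measure_nonneg[OF assms, of A]
  by (cases "A \<in> sets M") (auto simp: null_sets_def)

lemma pos_measure_of_finite_measure:
  assumes "finite_measure N" "sets N = sets M"
  shows "pos_measure M (\<lambda>A. if A \<in> sets M then measure N A else 0)"
  unfolding pos_measure_def signed_measure_def
proof safe
  fix A :: "nat \<Rightarrow> _" assume "disjoint_family A" "range A \<subseteq> sets M"
  thus "(\<lambda>n. if A n \<in> sets M then measure N (A n) else 0) sums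
      (if \<Union> (range A) \<in> sets M then measure N (\<Union> (range A)) else 0)"
    using finite_measure.finite_measure_UNION[OF assms(1), of A] assms(2) by auto
qed simp_all

section \<open>Jordan decomposition and total variation\<close>

definition jordan_pos :: "'a measure \<Rightarrow> ('a set \<Rightarrow> real) \<Rightarrow> 'a set \<Rightarrow> real" where
  "jordan_pos M \<mu> A = (if A \<in> sets M then Sup {\<mu> B | B. B \<in> sets M \<and> B \<subseteq> A} else 0)"

definition jordan_neg :: "'a measure \<Rightarrow> ('a set \<Rightarrow> real) \<Rightarrow> 'a set \<Rightarrow> real" where
  "jordan_neg M \<mu> A = jordan_pos M \<mu> A - \<mu> A"

context
  fixes M :: "'a measure" and \<mu> :: "'a set \<Rightarrow> real"
  assumes sm: "signed_measure M \<mu>"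
begin

lemma jordan_pos_ge:
  assumes "A \<in> sets M" "B \<in> sets M" "B \<subseteq> A"
  shows "\<mu> B \<le> jordan_pos M \<mu> A"
proof -
  obtain C where "\<forall>A\<in>sets M. \<bar>\<mu> A\<bar> \<le> C" using signed_measure_bounded[OF sm] by blast
  hence "bdd_above {\<mu> B | B. B \<in> sets M \<and> B \<subseteq> A}" unfolding bdd_above_def by (intro exI[of _ C]) force
  thus ?thesis using assms unfolding jordan_pos_def by (auto intro!: cSup_upper)
qed

lemma jordan_pos_le:
  assumes "\<And>B. B \<in> sets M \<Longrightarrow> B \<subseteq> A \<Longrightarrow> \<mu> B \<le> c"
  shows "jordan_pos M \<mu> A \<le> c"
proof -
  have "0 \<le> c" using assms[of "{}"] signed_measure_empty[OF sm] by simp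
  thus ?thesis using assms unfolding jordan_pos_def by (auto intro!: cSup_least)
qed

lemma jordan_pos_nonneg: "0 \<le> jordan_pos M \<mu> A"
  using jordan_pos_ge[of A "{}"] signed_measure_empty[OF sm] by (cases "A \<in> sets M") (auto simp: jordan_pos_def)

lemma le_jordan_pos: "\<mu> A \<le> jordan_pos M \<mu> A"
  using jordan_pos_ge[of A A] signed_measure_notin_sets[OF sm, of A] by (cases "A \<in> sets M") (auto simp: jordan_pos_def)

lemma jordan_pos_superadd:
  assumes "A \<in> sets M" "A' \<in> sets M" "A \<inter> A' = {}"
  shows "jordan_pos M \<mu> A + jordan_pos M \<mu> A' \<le> jordan_pos M \<mu> (A \<union> A')"
proof -
  have "\<mu> B' \<le> jordan_pos M \<mu> (A \<union> A') - jordan_pos M \<mu> A" if B': "B' \<in> sets M" "B' \<subseteq> A'" for B'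
  proof -
    have "\<mu> B \<le> jordan_pos M \<mu> (A \<union> A') - \<mu> B'" if B: "B \<in> sets M" "B \<subseteq> A" for B
    proof -
      have "\<mu> (B \<union> B') = \<mu> B + \<mu> B'" using signed_measure_Un[OF sm B(1) B'(1)] B B' assms(3) by auto
      moreover have "\<mu> (B \<union> B') \<le> jordan_pos M \<mu> (A \<union> A')" using assms B B' by (intro jordan_pos_ge) auto
      ultimately show ?thesis by simp
    qed
    hence "jordan_pos M \<mu> A \<le> jordan_pos M \<mu> (A \<union> A') - \<mu> B'" by (rule jordan_pos_le)
    thus ?thesis by simp
  qed
  hence "jordan_pos M \<mu> A' \<le> jordan_pos M \<mu> (A \<union> A') - jordan_pos M \<mu> A" by (rule jordan_pos_le)
  thus ?thesis by simp
qed

lemma jordan_pos_sum_le: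
  fixes n :: nat
  assumes "\<And>i. A i \<in> sets M" "disjoint_family A"
  shows "(\<Sum>i<n. jordan_pos M \<mu> (A i)) \<le> jordan_pos M \<mu> (\<Union>i<n. A i)"
proof (induction n)
  case 0 thus ?case using jordan_pos_nonneg by simp
next
  case (Suc n)
  have "A i \<inter> A n = {}" if "i < n" for i
    using assms(2) that unfolding disjoint_family_on_def by simp
  hence "jordan_pos M \<mu> (\<Union>i<n. A i) + jordan_pos M \<mu> (A n) \<le> jordan_pos M \<mu> ((\<Union>i<n. A i) \<union> A n)"
    using assms(1) by (intro jordan_pos_superadd) auto
  thus ?case using Suc.IH by (simp add: lessThan_Suc Un_commute)
qed

lemma jordan_pos_sums:
  assumes "disjoint_family A" "range A \<subseteq> sets M"
  shows "(\<lambda>n. jordan_pos M \<mu> (A n)) sums jordan_pos M \<mu> (\<Union>n. A n)"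
proof -
  have A: "\<And>i. A i \<in> sets M" using assms(2) by auto
  have partial: "(\<Sum>i<n. jordan_pos M \<mu> (A i)) \<le> jordan_pos M \<mu> (\<Union>n. A n)" for n
  proof -
    have "(\<Union>n. A n) \<in> sets M" using A by auto
    hence "jordan_pos M \<mu> (\<Union>i<n. A i) \<le> jordan_pos M \<mu> (\<Union>n. A n)"
      by (intro jordan_pos_le jordan_pos_ge) blast+
    thus ?thesis using jordan_pos_sum_le[OF A assms(1), of n] by linarith
  qed
  have summ: "summable (\<lambda>n. jordan_pos M \<mu> (A n))"
    by (rule summableI_nonneg_bounded[OF jordan_pos_nonneg partial])
  have "\<mu> B \<le> (\<Sum>n. jordan_pos M \<mu> (A n))" if B: "B \<in> sets M" "B \<subseteq> (\<Union>n. A n)" for B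
  proof -
    have "(\<lambda>n. \<mu> (B \<inter> A n)) sums \<mu> (\<Union>n. B \<inter> A n)"
      using assms(1) B A by (intro signed_measure_sums[OF sm]) (auto simp: disjoint_family_on_def)
    moreover have "(\<Union>n. B \<inter> A n) = B" using B by auto
    ultimately have S: "(\<lambda>n. \<mu> (B \<inter> A n)) sums \<mu> B" by simp
    hence "\<mu> B = (\<Sum>n. \<mu> (B \<inter> A n))" by (simp add: sums_iff)
    also have "\<dots> \<le> (\<Sum>n. jordan_pos M \<mu> (A n))"
      using S summ A B by (intro suminf_le) (auto intro!: jordan_pos_ge simp: sums_iff)
    finally show ?thesis .
  qed
  hence "jordan_pos M \<mu> (\<Union>n. A n) \<le> (\<Sum>n. jordan_pos M \<mu> (A n))" by (rule jordan_pos_le)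
  moreover have "(\<Sum>n. jordan_pos M \<mu> (A n)) \<le> jordan_pos M \<mu> (\<Union>n. A n)"
    by (rule suminf_le_const[OF summ partial])
  ultimately show ?thesis using summ summable_sums by (metis antisym)
qed

lemma pos_measure_jordan_pos: "pos_measure M (jordan_pos M \<mu>)"
  unfolding pos_measure_def signed_measure_def
proof (intro conjI allI impI ballI)
  show "jordan_pos M \<mu> A = 0" if "A \<notin> sets M" for A using that by (simp add: jordan_pos_def)
qed (simp_all add: jordan_pos_sums jordan_pos_nonneg)

lemma pos_measure_jordan_neg: "pos_measure M (jordan_neg M \<mu>)"
  unfolding pos_measure_def signed_measure_def jordan_neg_def
  using signed_measure_notin_sets[OF sm] le_jordan_pos
    pos_measure_jordan_pos[unfolded pos_measure_def signed_measure_def] signed_measure_sums[OF sm]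
  by (auto intro!: sums_diff)

lemma abs_le_jordan: "\<bar>\<mu> A\<bar> \<le> jordan_pos M \<mu> A + jordan_neg M \<mu> A"
  using le_jordan_pos[of A] jordan_pos_nonneg[of A] by (simp add: jordan_neg_def abs_le_iff)

lemma jordan_null:
  assumes "\<And>B. B \<in> sets M \<Longrightarrow> B \<subseteq> Z \<Longrightarrow> \<mu> B = 0"
  shows "jordan_pos M \<mu> Z = 0" "jordan_neg M \<mu> Z = 0"
proof -
  have "jordan_pos M \<mu> Z \<le> 0" using assms by (intro jordan_pos_le) auto
  thus "jordan_pos M \<mu> Z = 0" using jordan_pos_nonneg[of Z] by simp
  moreover have "\<mu> Z = 0" using assms[of Z] signed_measure_notin_sets[OF sm, of Z] by blast
  ultimately show "jordan_neg M \<mu> Z = 0" by (simp add: jordan_neg_def)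
qed

end

lemma variation_sum_le:
  assumes "pos_measure M \<nu>" "\<And>A. A \<in> sets M \<Longrightarrow> \<bar>\<mu> A\<bar> \<le> \<nu> A"
    and "finite \<A>" "\<A> \<subseteq> sets M" "disjoint \<A>"
  shows "(\<Sum>A\<in>\<A>. \<bar>\<mu> A\<bar>) \<le> \<nu> (space M)"
proof -
  interpret finite_measure "to_measure M \<nu>" by (rule finite_measure_to_measure[OF assms(1)])
  have "(\<Sum>A\<in>\<A>. \<bar>\<mu> A\<bar>) \<le> (\<Sum>A\<in>\<A>. measure (to_measure M \<nu>) A)"
    using assms(2,4) measure_to_measure[OF assms(1)] by (intro sum_mono) auto
  also have "\<dots> = measure (to_measure M \<nu>) (\<Union>\<A>)"
    using assms(3,4,5) by (intro measure_Union'[symmetric]) (auto simp: fmeasurable_eq_sets)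
  also have "\<dots> \<le> \<nu> (space M)"
    using assms(3,4) sets.sets_into_space measure_to_measure[OF assms(1)]
    by (auto intro!: pos_measure_mono[OF assms(1)])
  finally show ?thesis .
qed

lemma tv_norm_le:
  assumes "pos_measure M \<nu>" "\<And>A. A \<in> sets M \<Longrightarrow> \<bar>\<mu> A\<bar> \<le> \<nu> A"
  shows "tv_norm M \<mu> \<le> \<nu> (space M)"
  unfolding tv_norm_def
proof (rule cSup_least)
  show "{(\<Sum>A\<in>\<A>. \<bar>\<mu> A\<bar>) | \<A>. finite \<A> \<and> \<A> \<subseteq> sets M \<and> disjoint \<A>} \<noteq> {}"
    by (auto intro!: exI[of _ "{}"])
qed (use variation_sum_le[OF assms] in auto)

lemma tv_norm_ge_sum:
  assumes "signed_measure M \<mu>" "finite \<A>" "\<A> \<subseteq> sets M" "disjoint \<A>"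
  shows "(\<Sum>A\<in>\<A>. \<bar>\<mu> A\<bar>) \<le> tv_norm M \<mu>"
  unfolding tv_norm_def
proof (rule cSup_upper)
  have "pos_measure M (\<lambda>A. jordan_pos M \<mu> A + jordan_neg M \<mu> A)"
    using assms(1) by (intro pos_measure_add pos_measure_jordan_pos pos_measure_jordan_neg)
  thus "bdd_above {(\<Sum>A\<in>\<A>. \<bar>\<mu> A\<bar>) | \<A>. finite \<A> \<and> \<A> \<subseteq> sets M \<and> disjoint \<A>}"
    using variation_sum_le abs_le_jordan[OF assms(1)] unfolding bdd_above_def by blast
qed (use assms in auto)

lemma tv_norm_nonneg: "signed_measure M \<mu> \<Longrightarrow> 0 \<le> tv_norm M \<mu>"
  using tv_norm_ge_sum[of M \<mu> "{}"] by simp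

lemma tv_norm_jordan:
  assumes sm: "signed_measure M \<mu>"
  shows "tv_norm M \<mu> = jordan_pos M \<mu> (space M) + jordan_neg M \<mu> (space M)"
proof (rule antisym)
  show "tv_norm M \<mu> \<le> jordan_pos M \<mu> (space M) + jordan_neg M \<mu> (space M)"
    using sm by (intro tv_norm_le pos_measure_add pos_measure_jordan_pos pos_measure_jordan_neg abs_le_jordan)
  have "\<mu> B \<le> (tv_norm M \<mu> + \<mu> (space M)) / 2" if B: "B \<in> sets M" "B \<subseteq> space M" for B
  proof (cases "B = space M - B")
    case True
    hence "B = {}" by auto
    thus ?thesis using tv_norm_nonneg[OF sm] signed_measure_empty[OF sm] True by simp
  next
    case False
    have "(\<Sum>A\<in>{B, space M - B}. \<bar>\<mu> A\<bar>) \<le> tv_norm M \<mu>"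
      using B by (intro tv_norm_ge_sum[OF sm]) (auto simp: pairwise_def disjnt_def)
    moreover have "\<mu> (space M - B) = \<mu> (space M) - \<mu> B" by (rule signed_measure_Diff[OF sm sets.top B])
    ultimately have "2 * \<mu> B \<le> tv_norm M \<mu> + \<mu> (space M)" using False by (simp add: abs_le_iff)
    thus ?thesis by simp
  qed
  hence "jordan_pos M \<mu> (space M) \<le> (tv_norm M \<mu> + \<mu> (space M)) / 2"
    by (rule jordan_pos_le[OF sm])
  thus "jordan_pos M \<mu> (space M) + jordan_neg M \<mu> (space M) \<le> tv_norm M \<mu>"
    by (simp add: jordan_neg_def)
qed

section \<open>Densities and integration against a signed measure\<close>

lemma absolutely_continuous_to_measure:
  assumes "pos_measure M \<rho>" "pos_measure M \<nu>" "abs_cont M \<nu> \<rho>"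
  shows "absolutely_continuous (to_measure M \<rho>) (to_measure M \<nu>)"
  using assms unfolding absolutely_continuous_def abs_cont_def
  by (auto simp: null_sets_to_measure)

lemma real_Radon_Nikodym:
  assumes "pos_measure M \<rho>" "pos_measure M \<nu>" "abs_cont M \<nu> \<rho>"
  obtains g where "g \<in> borel_measurable M" "\<And>x. 0 \<le> g x" "integrable (to_measure M \<rho>) g"
    "to_measure M \<nu> = density (to_measure M \<rho>) (\<lambda>x. ennreal (g x))"
proof -
  interpret R: finite_measure "to_measure M \<rho>" by (rule finite_measure_to_measure[OF assms(1)])
  interpret N: finite_measure "to_measure M \<nu>" by (rule finite_measure_to_measure[OF assms(2)])
  obtain p where p: "p \<in> borel_measurable M" "density (to_measure M \<rho>) p = to_measure M \<nu>"
    using R.Radon_Nikodym_finite_measure[OF N.finite_measure_axioms _ absolutely_continuous_to_measure[OF assms]]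
    by auto
  have "emeasure (density (to_measure M \<rho>) p) (space M) = (\<integral>\<^sup>+x. p x \<partial>to_measure M \<rho>)"
    using p(1) by (subst emeasure_density) (auto intro!: nn_integral_cong simp: indicator_def)
  hence fin: "(\<integral>\<^sup>+x. p x \<partial>to_measure M \<rho>) \<noteq> \<infinity>" using p(2) N.emeasure_finite[of "space M"] by simp
  hence "AE x in to_measure M \<rho>. p x \<noteq> \<infinity>" using p(1) by (intro nn_integral_PInf_AE) auto
  hence ae: "AE x in to_measure M \<rho>. p x = ennreal (enn2real (p x))"
    by eventually_elim (auto simp: less_top)
  show ?thesis
  proof
    show "(\<lambda>x. enn2real (p x)) \<in> borel_measurable M" using p(1) by measurable
    have "(\<integral>\<^sup>+x. ennreal (enn2real (p x)) \<partial>to_measure M \<rho>) = (\<integral>\<^sup>+x. p x \<partial>to_measure M \<rho>)"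
      by (rule nn_integral_cong_AE) (use ae in auto)
    thus "integrable (to_measure M \<rho>) (\<lambda>x. enn2real (p x))"
      using fin p(1) by (intro integrableI_nonneg) (auto simp: less_top)
    have "density (to_measure M \<rho>) p = density (to_measure M \<rho>) (\<lambda>x. ennreal (enn2real (p x)))"
      by (rule density_cong) (use ae p(1) in auto)
    thus "to_measure M \<nu> = density (to_measure M \<rho>) (\<lambda>x. ennreal (enn2real (p x)))" using p(2) by simp
  qed simp
qed

lemma measure_density_real:
  assumes "g \<in> borel_measurable M" "\<And>x. 0 \<le> g x" "integrable (to_measure M \<rho>) g" "A \<in> sets M"
  shows "measure (density (to_measure M \<rho>) (\<lambda>x. ennreal (g x))) A = (\<integral>x. g x * indicator A x \<partial>to_measure M \<rho>)"
proof -
  have "measure (density (to_measure M \<rho>) (\<lambda>x. ennreal (g x))) A =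
      integral\<^sup>L (density (to_measure M \<rho>) (\<lambda>x. ennreal (g x))) (indicator A)"
    using assms(4) by (simp add: Int_absorb2 sets.sets_into_space)
  also have "\<dots> = (\<integral>x. g x * indicator A x \<partial>to_measure M \<rho>)"
    using assms by (subst integral_density) auto
  finally show ?thesis .
qed

lemma pos_measure_density:
  assumes "g \<in> borel_measurable M" "\<And>x. 0 \<le> g x" "integrable (to_measure M \<rho>) g"
  shows "pos_measure M (\<lambda>A. if A \<in> sets M then (\<integral>x. g x * indicator A x \<partial>to_measure M \<rho>) else 0)"
proof -
  have "finite_measure (density (to_measure M \<rho>) (\<lambda>x. ennreal (g x)))"
  proof (rule finite_measureI)
    have "emeasure (density (to_measure M \<rho>) (\<lambda>x. ennreal (g x))) (space M) = (\<integral>\<^sup>+x. ennreal (g x) \<partial>to_measure M \<rho>)"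
      using assms(1) by (subst emeasure_density) (auto intro!: nn_integral_cong simp: indicator_def)
    also have "\<dots> = ennreal (\<integral>x. g x \<partial>to_measure M \<rho>)"
      using assms by (intro nn_integral_eq_integral) auto
    finally show "emeasure (density (to_measure M \<rho>) (\<lambda>x. ennreal (g x)))
        (space (density (to_measure M \<rho>) (\<lambda>x. ennreal (g x)))) \<noteq> \<infinity>"
      by simp
  qed
  from pos_measure_of_finite_measure[OF this] show ?thesis
    using measure_density_real[OF assms] by (simp cong: if_cong)
qed

lemma integrable_mult_bounded:
  fixes g h :: "'a \<Rightarrow> real"
  assumes h: "integrable N h" and g: "g \<in> borel_measurable N" and gK: "AE x in N. \<bar>g x\<bar> \<le> K"
  shows "integrable N (\<lambda>x. g x * h x)"
proof (rule Bochner_Integration.integrable_bound[of _ "\<lambda>x. K * h x"])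
  show "integrable N (\<lambda>x. K * h x)" using h by simp
  show "(\<lambda>x. g x * h x) \<in> borel_measurable N" using g borel_measurable_integrable[OF h] by simp
  show "AE x in N. norm (g x * h x) \<le> norm (K * h x)"
    using gK by eventually_elim (auto simp: abs_mult intro: mult_right_mono order_trans[OF _ abs_ge_self])
qed

definition has_density :: "'a measure \<Rightarrow> ('a set \<Rightarrow> real) \<Rightarrow> ('a set \<Rightarrow> real) \<Rightarrow> ('a \<Rightarrow> real) \<Rightarrow> bool" where
  "has_density M \<rho> \<mu> h \<longleftrightarrow> h \<in> borel_measurable M \<and> integrable (to_measure M \<rho>) h \<and>
     (\<forall>A\<in>sets M. \<mu> A = (\<integral>x. h x * indicator A x \<partial>to_measure M \<rho>))"

lemma has_density_unique:
  assumes "has_density M \<rho> \<mu> h" "has_density M \<rho> \<mu> h'"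
  shows "AE x in to_measure M \<rho>. h x = h' x"
  using assms unfolding has_density_def
  by (intro density_unique_real) (auto simp: set_lebesgue_integral_def mult.commute)

definition signed_integral :: "'a measure \<Rightarrow> ('a \<Rightarrow> real) \<Rightarrow> ('a set \<Rightarrow> real) \<Rightarrow> real" where
  "signed_integral M f \<mu> =
     integral\<^sup>L (to_measure M (jordan_pos M \<mu>)) f - integral\<^sup>L (to_measure M (jordan_neg M \<mu>)) f"

lemma abs_cont_jordan:
  assumes "signed_measure M \<mu>" "abs_cont M \<mu> \<rho>"
  shows "abs_cont M (jordan_pos M \<mu>) \<rho>" "abs_cont M (jordan_neg M \<mu>) \<rho>"
  using assms jordan_null[OF assms(1)] unfolding abs_cont_def by (meson order_trans)+

lemma signed_integral_density_exists:
  assumes sm: "signed_measure M \<mu>" and pr: "pos_measure M \<rho>" and ac: "abs_cont M \<mu> \<rho>"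
  obtains h where "has_density M \<rho> \<mu> h"
    "\<And>(f :: 'a \<Rightarrow> real) K. f \<in> borel_measurable M \<Longrightarrow> AE x in to_measure M \<rho>. \<bar>f x\<bar> \<le> K \<Longrightarrow>
       integrable (to_measure M \<rho>) (\<lambda>x. h x * f x) \<and> signed_integral M f \<mu> = (\<integral>x. h x * f x \<partial>to_measure M \<rho>)"
proof -
  obtain gp where gp[measurable]: "gp \<in> borel_measurable M" and gp_nonneg: "\<And>x. 0 \<le> gp x"
    and gp_int: "integrable (to_measure M \<rho>) gp"
    and gp_dens: "to_measure M (jordan_pos M \<mu>) = density (to_measure M \<rho>) (\<lambda>x. ennreal (gp x))"
    using real_Radon_Nikodym[OF pr pos_measure_jordan_pos[OF sm] abs_cont_jordan(1)[OF sm ac]] by blast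
  obtain gn where gn[measurable]: "gn \<in> borel_measurable M" and gn_nonneg: "\<And>x. 0 \<le> gn x"
    and gn_int: "integrable (to_measure M \<rho>) gn"
    and gn_dens: "to_measure M (jordan_neg M \<mu>) = density (to_measure M \<rho>) (\<lambda>x. ennreal (gn x))"
    using real_Radon_Nikodym[OF pr pos_measure_jordan_neg[OF sm] abs_cont_jordan(2)[OF sm ac]] by blast
  show ?thesis
  proof
    show "has_density M \<rho> \<mu> (\<lambda>x. gp x - gn x)"
      unfolding has_density_def
    proof (intro conjI ballI)
      show "(\<lambda>x. gp x - gn x) \<in> borel_measurable M" by measurable
      show "integrable (to_measure M \<rho>) (\<lambda>x. gp x - gn x)" using gp_int gn_int by simp
      fix A assume A: "A \<in> sets M"
      have "jordan_pos M \<mu> A = (\<integral>x. gp x * indicator A x \<partial>to_measure M \<rho>)"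
        using measure_density_real[OF gp gp_nonneg gp_int A] gp_dens
          measure_to_measure[OF pos_measure_jordan_pos[OF sm]] by metis
      moreover have "jordan_neg M \<mu> A = (\<integral>x. gn x * indicator A x \<partial>to_measure M \<rho>)"
        using measure_density_real[OF gn gn_nonneg gn_int A] gn_dens
          measure_to_measure[OF pos_measure_jordan_neg[OF sm]] by metis
      ultimately show "\<mu> A = (\<integral>x. (gp x - gn x) * indicator A x \<partial>to_measure M \<rho>)"
        using A gp_int gn_int unfolding left_diff_distrib
        by (simp add: jordan_neg_def integrable_real_mult_indicator)
    qed
  next
    fix f :: "'a \<Rightarrow> real" and K :: real
    assume f[measurable]: "f \<in> borel_measurable M" and fK: "AE x in to_measure M \<rho>. \<bar>f x\<bar> \<le> K"
    have "integral\<^sup>L (to_measure M (jordan_pos M \<mu>)) f = (\<integral>x. gp x * f x \<partial>to_measure M \<rho>)"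
      unfolding gp_dens using gp_nonneg by (subst integral_density) auto
    moreover have "integral\<^sup>L (to_measure M (jordan_neg M \<mu>)) f = (\<integral>x. gn x * f x \<partial>to_measure M \<rho>)"
      unfolding gn_dens using gn_nonneg by (subst integral_density) auto
    moreover have "integrable (to_measure M \<rho>) (\<lambda>x. f x * gp x)" "integrable (to_measure M \<rho>) (\<lambda>x. f x * gn x)"
      using f by (intro integrable_mult_bounded[OF gp_int _ fK] integrable_mult_bounded[OF gn_int _ fK], simp)+
    ultimately show "integrable (to_measure M \<rho>) (\<lambda>x. (gp x - gn x) * f x) \<and>
        signed_integral M f \<mu> = (\<integral>x. (gp x - gn x) * f x \<partial>to_measure M \<rho>)"
      unfolding signed_integral_def left_diff_distrib by (simp add: mult.commute)
  qed
qed

lemma has_density_exists: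
  assumes "signed_measure M \<mu>" "pos_measure M \<rho>" "abs_cont M \<mu> \<rho>"
  obtains h where "has_density M \<rho> \<mu> h"
  by (rule signed_integral_density_exists[OF assms]) (rule that)

lemma signed_integral_eq_density:
  assumes sm: "signed_measure M \<mu>" and pr: "pos_measure M \<rho>" and ac: "abs_cont M \<mu> \<rho>"
    and hd: "has_density M \<rho> \<mu> h" and f: "f \<in> borel_measurable M" and fK: "AE x in to_measure M \<rho>. \<bar>f x\<bar> \<le> K"
  shows "signed_integral M f \<mu> = (\<integral>x. h x * f x \<partial>to_measure M \<rho>)"
    and "integrable (to_measure M \<rho>) (\<lambda>x. h x * f x)"
proof -
  obtain h' where h': "has_density M \<rho> \<mu> h'" "integrable (to_measure M \<rho>) (\<lambda>x. h' x * f x)"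
    "signed_integral M f \<mu> = (\<integral>x. h' x * f x \<partial>to_measure M \<rho>)"
    using signed_integral_density_exists[OF sm pr ac] f fK by metis
  have ae: "AE x in to_measure M \<rho>. h' x * f x = h x * f x"
    using has_density_unique[OF h'(1) hd] by eventually_elim simp
  have m: "(\<lambda>x. h x * f x) \<in> borel_measurable M" "(\<lambda>x. h' x * f x) \<in> borel_measurable M"
    using hd h'(1) f unfolding has_density_def by auto
  show "signed_integral M f \<mu> = (\<integral>x. h x * f x \<partial>to_measure M \<rho>)"
    unfolding h'(3) by (rule integral_cong_AE) (use m ae in auto)
  show "integrable (to_measure M \<rho>) (\<lambda>x. h x * f x)"
    using integrable_cong_AE[of "\<lambda>x. h' x * f x" "to_measure M \<rho>" "\<lambda>x. h x * f x"] m ae h'(2) by auto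
qed

lemma integral_abs_le_const:
  assumes "finite_measure N" "f \<in> borel_measurable N" "AE x in N. \<bar>f x\<bar> \<le> K"
  shows "\<bar>integral\<^sup>L N f\<bar> \<le> K * measure N (space N)"
proof -
  interpret finite_measure N by fact
  have K: "integrable N (\<lambda>x. K)" by simp
  have "integrable N f"
    by (rule Bochner_Integration.integrable_bound[OF K assms(2)]) (use assms(3) in auto)
  have "\<bar>integral\<^sup>L N f\<bar> \<le> (\<integral>x. \<bar>f x\<bar> \<partial>N)" by (rule integral_abs_bound)
  also have "\<dots> \<le> (\<integral>x. K \<partial>N)" using \<open>integrable N f\<close> K assms(3) by (intro integral_mono_AE) auto
  finally show ?thesis by (simp add: mult.commute)
qed

lemma signed_integral_abs_le:
  assumes sm: "signed_measure M \<mu>" and pr: "pos_measure M \<rho>" and ac: "abs_cont M \<mu> \<rho>"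
    and f: "f \<in> borel_measurable M" and fK: "AE x in to_measure M \<rho>. \<bar>f x\<bar> \<le> K"
  shows "\<bar>signed_integral M f \<mu>\<bar> \<le> K * tv_norm M \<mu>"
proof -
  have "\<bar>integral\<^sup>L (to_measure M \<sigma>) f\<bar> \<le> K * \<sigma> (space M)"
    if \<sigma>: "pos_measure M \<sigma>" "abs_cont M \<sigma> \<rho>" for \<sigma>
  proof -
    have "AE x in to_measure M \<sigma>. \<bar>f x\<bar> \<le> K"
      using absolutely_continuous_AE[OF _ absolutely_continuous_to_measure[OF pr \<sigma>] fK] by simp
    thus ?thesis
      using integral_abs_le_const[OF finite_measure_to_measure[OF \<sigma>(1)]] f measure_to_measure[OF \<sigma>(1)]
      by simp
  qed
  from this[OF pos_measure_jordan_pos[OF sm] abs_cont_jordan(1)[OF sm ac]]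
       this[OF pos_measure_jordan_neg[OF sm] abs_cont_jordan(2)[OF sm ac]]
  show ?thesis unfolding signed_integral_def tv_norm_jordan[OF sm] by (simp add: distrib_left)
qed

lemma integrable_indicator_to_measure:
  assumes "pos_measure M Q" "A \<in> sets M"
  shows "integrable (to_measure M Q) (indicator A :: 'a \<Rightarrow> real)"
  using finite_measure.emeasure_finite[OF finite_measure_to_measure[OF assms(1)]] assms(2)
  by (simp add: less_top)

lemma integral_indicator_to_measure:
  "pos_measure M Q \<Longrightarrow> A \<in> sets M \<Longrightarrow> (\<integral>x. indicator A x \<partial>to_measure M Q) = Q A"
  using measure_to_measure by (simp add: Int_absorb2 sets.sets_into_space)

lemma null_if_integral_nonpos:
  fixes u :: "'a \<Rightarrow> real"
  assumes P: "pos_measure M P" and D: "D \<in> sets M"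
    and u: "integrable (to_measure M P) (\<lambda>x. indicator D x * u x)" and pos: "\<And>x. x \<in> D \<Longrightarrow> 0 < u x"
    and le: "(\<integral>x. indicator D x * u x \<partial>to_measure M P) \<le> 0"
  shows "P D = 0"
proof -
  have nonneg: "AE x in to_measure M P. 0 \<le> indicator D x * u x"
    using pos by (intro AE_I2) (auto simp: indicator_def less_imp_le)
  hence "(\<integral>x. indicator D x * u x \<partial>to_measure M P) = 0"
    using le integral_nonneg_AE[OF nonneg] by linarith
  hence "AE x in to_measure M P. indicator D x * u x = 0"
    using integral_nonneg_eq_0_iff_AE[OF u nonneg] by simp
  hence "AE x in to_measure M P. x \<notin> D"
    by eventually_elim (use pos in \<open>fastforce simp: indicator_def\<close>)
  hence "D \<in> null_sets (to_measure M P)" using AE_iff_null_sets[of D "to_measure M P"] D by simp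
  thus ?thesis using null_sets_to_measure[OF P] by simp
qed

definition signed_density :: "'a measure \<Rightarrow> ('a set \<Rightarrow> real) \<Rightarrow> ('a \<Rightarrow> real) \<Rightarrow> 'a set \<Rightarrow> real" where
  "signed_density M \<rho> h A = (if A \<in> sets M then (\<integral>x. h x * indicator A x \<partial>to_measure M \<rho>) else 0)"

context
  fixes M :: "'a measure" and \<rho> :: "'a set \<Rightarrow> real" and h :: "'a \<Rightarrow> real"
  assumes pr: "pos_measure M \<rho>" and hi: "integrable (to_measure M \<rho>) h"
begin

lemma signed_measure_signed_density: "signed_measure M (signed_density M \<rho> h)"
proof -
  define hp where "hp x = max (h x) 0" for x
  define hn where "hn x = max (- h x) 0" for x
  have [measurable]: "h \<in> borel_measurable M" using borel_measurable_integrable[OF hi] by simp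
  have i: "integrable (to_measure M \<rho>) hp" "integrable (to_measure M \<rho>) hn"
    unfolding hp_def hn_def using hi by auto
  have "signed_measure M (\<lambda>A. 1 * (if A \<in> sets M then (\<integral>x. hp x * indicator A x \<partial>to_measure M \<rho>) else 0)
      + (-1) * (if A \<in> sets M then (\<integral>x. hn x * indicator A x \<partial>to_measure M \<rho>) else 0))"
    using i unfolding hp_def hn_def
    by (intro signed_measure_lin pos_measure_signed pos_measure_density) auto
  moreover have "signed_density M \<rho> h = (\<lambda>A. 1 * (if A \<in> sets M then (\<integral>x. hp x * indicator A x \<partial>to_measure M \<rho>) else 0)
      + (-1) * (if A \<in> sets M then (\<integral>x. hn x * indicator A x \<partial>to_measure M \<rho>) else 0))"
    unfolding signed_density_def
  proof (intro ext)
    fix A show "(if A \<in> sets M then (\<integral>x. h x * indicator A x \<partial>to_measure M \<rho>) else 0) =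
      1 * (if A \<in> sets M then (\<integral>x. hp x * indicator A x \<partial>to_measure M \<rho>) else 0)
      + (-1) * (if A \<in> sets M then (\<integral>x. hn x * indicator A x \<partial>to_measure M \<rho>) else 0)"
    proof (cases "A \<in> sets M")
      case True
      have "(\<integral>x. h x * indicator A x \<partial>to_measure M \<rho>) =
          (\<integral>x. hp x * indicator A x - hn x * indicator A x \<partial>to_measure M \<rho>)"
        by (rule Bochner_Integration.integral_cong) (auto simp: hp_def hn_def max_def)
      thus ?thesis using True i by (simp add: integrable_real_mult_indicator)
    qed simp
  qed
  ultimately show ?thesis by simp
qed

lemma has_density_signed_density: "has_density M \<rho> (signed_density M \<rho> h) h"
  unfolding has_density_def signed_density_def using hi borel_measurable_integrable[OF hi] by auto

lemma abs_cont_signed_density: "abs_cont M (signed_density M \<rho> h) \<rho>"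
  unfolding abs_cont_def
proof safe
  fix A B assume A: "A \<in> sets M" "\<rho> A = 0" and B: "B \<in> sets M" "B \<subseteq> A"
  have "B \<in> null_sets (to_measure M \<rho>)"
    using pos_measure_null_subset[OF pr A(1) B] A(2) B(1) null_sets_to_measure[OF pr] by simp
  hence "AE x in to_measure M \<rho>. h x * indicator B x = 0"
    by (rule AE_mp[OF AE_not_in]) simp
  hence "(\<integral>x. h x * indicator B x \<partial>to_measure M \<rho>) = (\<integral>x. 0 \<partial>to_measure M \<rho>)"
    using B(1) borel_measurable_integrable[OF hi] by (intro integral_cong_AE) auto
  thus "signed_density M \<rho> h B = 0" using B(1) by (simp add: signed_density_def)
qed

lemma tv_norm_signed_density_le: "tv_norm M (signed_density M \<rho> h) \<le> (\<integral>x. \<bar>h x\<bar> \<partial>to_measure M \<rho>)"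
proof -
  have "tv_norm M (signed_density M \<rho> h) \<le>
      (if space M \<in> sets M then (\<integral>x. \<bar>h x\<bar> * indicator (space M) x \<partial>to_measure M \<rho>) else 0)"
  proof (rule tv_norm_le)
    show "pos_measure M (\<lambda>A. if A \<in> sets M then (\<integral>x. \<bar>h x\<bar> * indicator A x \<partial>to_measure M \<rho>) else 0)"
      using hi borel_measurable_integrable[OF hi] by (intro pos_measure_density) auto
    fix A assume "A \<in> sets M"
    moreover have "(\<lambda>x. \<bar>h x * indicator A x\<bar>) = (\<lambda>x. \<bar>h x\<bar> * indicator A x)"
      by (auto simp: indicator_def)
    ultimately show "\<bar>signed_density M \<rho> h A\<bar> \<le>
        (if A \<in> sets M then (\<integral>x. \<bar>h x\<bar> * indicator A x \<partial>to_measure M \<rho>) else 0)"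
      using integral_abs_bound[of "to_measure M \<rho>" "\<lambda>x. h x * indicator A x"]
      by (simp add: signed_density_def)
  qed
  also have "\<dots> = (\<integral>x. \<bar>h x\<bar> \<partial>to_measure M \<rho>)"
    by (auto intro: Bochner_Integration.integral_cong)
  finally show ?thesis .
qed

end

lemma signed_density_lin:
  assumes "integrable (to_measure M \<rho>) h1" "integrable (to_measure M \<rho>) h2"
  shows "signed_density M \<rho> (\<lambda>x. a * h1 x + b * h2 x) = (\<lambda>A. a * signed_density M \<rho> h1 A + b * signed_density M \<rho> h2 A)"
proof
  fix A show "signed_density M \<rho> (\<lambda>x. a * h1 x + b * h2 x) A = a * signed_density M \<rho> h1 A + b * signed_density M \<rho> h2 A"
  proof (cases "A \<in> sets M")
    case True
    have "(\<integral>x. (a * h1 x + b * h2 x) * indicator A x \<partial>to_measure M \<rho>) =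
        (\<integral>x. a * (h1 x * indicator A x) + b * (h2 x * indicator A x) \<partial>to_measure M \<rho>)"
      by (rule Bochner_Integration.integral_cong) (auto simp: algebra_simps)
    also have "\<dots> = a * (\<integral>x. h1 x * indicator A x \<partial>to_measure M \<rho>) + b * (\<integral>x. h2 x * indicator A x \<partial>to_measure M \<rho>)"
      using True assms by (subst Bochner_Integration.integral_add) (auto intro!: integrable_real_mult_indicator)
    finally show ?thesis using True by (simp add: signed_density_def)
  qed (simp add: signed_density_def)
qed

section \<open>Bounded functionals on \<open>L\<^sup>1(Q)\<close>\<close>

lemma has_density_le_AE:
  assumes Q: "pos_measure M Q" and hd: "has_density M Q \<nu> g" and le: "\<And>A. A \<in> sets M \<Longrightarrow> \<nu> A \<le> C * Q A"
  shows "AE x in to_measure M Q. g x \<le> C"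
proof -
  have g[measurable]: "g \<in> borel_measurable M" and gi: "integrable (to_measure M Q) g"
    and \<nu>: "\<And>A. A \<in> sets M \<Longrightarrow> \<nu> A = (\<integral>x. g x * indicator A x \<partial>to_measure M Q)"
    using hd unfolding has_density_def by auto
  define D where "D = {x \<in> space M. C < g x}"
  have D[measurable]: "D \<in> sets M" unfolding D_def by measurable
  have iD: "integrable (to_measure M Q) (\<lambda>x. indicator D x * (g x - C))"
    using gi integrable_indicator_to_measure[OF Q D]
    by (simp add: right_diff_distrib mult.commute[of "indicator D _"] integrable_real_mult_indicator)
  have "(\<integral>x. indicator D x * (g x - C) \<partial>to_measure M Q) =
      (\<integral>x. g x * indicator D x \<partial>to_measure M Q) - C * (\<integral>x. indicator D x \<partial>to_measure M Q)"
    using gi integrable_indicator_to_measure[OF Q D]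
    by (simp add: right_diff_distrib mult.commute[of "indicator D _"] integrable_real_mult_indicator)
  also have "\<dots> = \<nu> D - C * Q D" using \<nu>[OF D] integral_indicator_to_measure[OF Q D] by simp
  also have "\<dots> \<le> 0" using le[OF D] by simp
  finally have "Q D = 0" using null_if_integral_nonpos[OF Q D iD] by (simp add: D_def)
  hence "D \<in> null_sets (to_measure M Q)" using null_sets_to_measure[OF Q] D by simp
  thus ?thesis by (rule AE_I') (auto simp: D_def not_less)
qed

lemma has_density_bounded:
  assumes Q: "pos_measure M Q" and hd: "has_density M Q \<nu> g0" and C: "0 \<le> C"
    and bound: "\<And>A. A \<in> sets M \<Longrightarrow> \<bar>\<nu> A\<bar> \<le> C * Q A"
  obtains g where "has_density M Q \<nu> g" "\<And>x. \<bar>g x\<bar> \<le> C"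
proof -
  have g0[measurable]: "g0 \<in> borel_measurable M" and g0i: "integrable (to_measure M Q) g0"
    and \<nu>: "\<And>A. A \<in> sets M \<Longrightarrow> \<nu> A = (\<integral>x. g0 x * indicator A x \<partial>to_measure M Q)"
    using hd unfolding has_density_def by auto
  have "has_density M Q (\<lambda>A. - \<nu> A) (\<lambda>x. - g0 x)"
    using hd unfolding has_density_def by auto
  hence bounds: "AE x in to_measure M Q. g0 x \<le> C \<and> - g0 x \<le> C"
    using has_density_le_AE[OF Q hd] has_density_le_AE[OF Q] bound by (auto simp: abs_le_iff)
  define g where "g x = max (- C) (min C (g0 x))" for x
  have ae: "AE x in to_measure M Q. g x = g0 x"
    using bounds by eventually_elim (auto simp: g_def)
  have g[measurable]: "g \<in> borel_measurable M" unfolding g_def by measurable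
  have "integrable (to_measure M Q) g \<longleftrightarrow> integrable (to_measure M Q) g0"
    using ae by (intro integrable_cong_AE) auto
  moreover have "(\<integral>x. g x * indicator A x \<partial>to_measure M Q) = (\<integral>x. g0 x * indicator A x \<partial>to_measure M Q)"
    if "A \<in> sets M" for A
    using ae that by (intro integral_cong_AE) auto
  ultimately have "has_density M Q \<nu> g"
    using g0i \<nu> unfolding has_density_def by auto
  moreover have "\<bar>g x\<bar> \<le> C" for x using C by (simp add: g_def)
  ultimately show ?thesis by (rule that)
qed

lemma signed_measure_if_additive_dominated:
  assumes Q: "pos_measure M Q" and notin: "\<And>A. A \<notin> sets M \<Longrightarrow> \<nu> A = 0"
    and add: "\<And>A B. A \<in> sets M \<Longrightarrow> B \<in> sets M \<Longrightarrow> A \<inter> B = {} \<Longrightarrow> \<nu> (A \<union> B) = \<nu> A + \<nu> B"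
    and bound: "\<And>A. A \<in> sets M \<Longrightarrow> \<bar>\<nu> A\<bar> \<le> C * Q A"
  shows "signed_measure M \<nu>"
  unfolding signed_measure_def
proof (intro conjI allI impI notin)
  fix A :: "nat \<Rightarrow> 'a set" assume disj: "disjoint_family A" and As: "range A \<subseteq> sets M"
  hence A: "\<And>i. A i \<in> sets M" by auto
  define U where "U = (\<Union>n. A n)"
  define V where "V n = (\<Union>i<n. A i)" for n
  have U: "U \<in> sets M" and V: "V n \<in> sets M" and VU: "V n \<subseteq> U" for n
    unfolding U_def V_def using A by auto
  have partial: "(\<Sum>i<n. \<nu> (A i)) = \<nu> (V n)" for n
  proof (induction n)
    case 0 thus ?case using add[of "{}" "{}"] by (simp add: V_def)
  next
    case (Suc n)
    have "A i \<inter> A n = {}" if "i < n" for i using disj that unfolding disjoint_family_on_def by simp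
    hence "\<nu> (V n \<union> A n) = \<nu> (V n) + \<nu> (A n)" using V A by (intro add) (auto simp: V_def)
    thus ?case using Suc.IH by (simp add: V_def lessThan_Suc Un_commute)
  qed
  have tail: "\<bar>(\<Sum>i<n. \<nu> (A i)) - \<nu> U\<bar> \<le> C * (Q U - (\<Sum>i<n. Q (A i)))" for n
  proof -
    have UV: "U - V n \<in> sets M" using U V by auto
    have "\<nu> U = \<nu> (V n) + \<nu> (U - V n)" using add[OF V[of n] UV] VU[of n] by (simp add: Un_absorb1)
    moreover have "Q (U - V n) = Q U - (\<Sum>i<n. Q (A i))"
      using signed_measure_Diff[OF pos_measure_signed[OF Q] U V VU]
        signed_measure_UN_lessThan[OF pos_measure_signed[OF Q] A disj] by (simp add: V_def)
    ultimately show ?thesis using partial[of n] bound[of "U - V n"] U V by simp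
  qed
  have "(\<lambda>n. Q (A n)) sums Q U"
    unfolding U_def by (rule signed_measure_sums[OF pos_measure_signed[OF Q] disj As])
  hence "(\<lambda>n. C * (Q U - (\<Sum>i<n. Q (A i)))) \<longlonglongrightarrow> C * (Q U - Q U)"
    unfolding sums_def by (intro tendsto_intros)
  hence "(\<lambda>n. C * (Q U - (\<Sum>i<n. Q (A i)))) \<longlonglongrightarrow> 0" by simp
  moreover have "eventually (\<lambda>n. norm ((\<Sum>i<n. \<nu> (A i)) - \<nu> U) \<le> C * (Q U - (\<Sum>i<n. Q (A i)))) sequentially"
    using tail by (intro always_eventually) simp
  ultimately have "(\<lambda>n. (\<Sum>i<n. \<nu> (A i)) - \<nu> U) \<longlonglongrightarrow> 0"
    by (rule Lim_null_comparison[rotated])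
  thus "(\<lambda>n. \<nu> (A n)) sums \<nu> (\<Union> (range A))"
    unfolding sums_def U_def by (rule LIM_zero_cancel)
qed

lemma dominated_tendsto_L1:
  fixes f :: "'a \<Rightarrow> real"
  assumes "integrable N f" "\<And>i. s i \<in> borel_measurable N"
    and "\<And>x. x \<in> space N \<Longrightarrow> (\<lambda>i. s i x) \<longlonglongrightarrow> f x"
    and "\<And>i x. x \<in> space N \<Longrightarrow> \<bar>s i x\<bar> \<le> 2 * \<bar>f x\<bar>"
  shows "(\<lambda>i. \<integral>x. \<bar>s i x - f x\<bar> \<partial>N) \<longlonglongrightarrow> 0"
proof -
  have "(\<lambda>i. \<integral>x. \<bar>s i x - f x\<bar> \<partial>N) \<longlonglongrightarrow> (\<integral>x. 0 \<partial>N)"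
  proof (rule integral_dominated_convergence[where w="\<lambda>x. 3 * \<bar>f x\<bar>"])
    show "AE x in N. (\<lambda>i. \<bar>s i x - f x\<bar>) \<longlonglongrightarrow> 0"
      using assms(3) by (intro AE_I2 tendsto_rabs_zero LIM_zero)
    show "AE x in N. norm \<bar>s i x - f x\<bar> \<le> 3 * \<bar>f x\<bar>" for i
    proof (rule AE_I2)
      fix x assume "x \<in> space N"
      thus "norm \<bar>s i x - f x\<bar> \<le> 3 * \<bar>f x\<bar>" using assms(4)[of x i] by simp
    qed
  qed (use assms(1,2) borel_measurable_integrable[OF assms(1)] in simp_all)
  thus ?thesis by simp
qed

lemma integral_mult_bounded_dist_le:
  fixes g h1 h2 :: "'a \<Rightarrow> real"
  assumes g: "g \<in> borel_measurable N" "\<And>x. \<bar>g x\<bar> \<le> C" and h: "integrable N h1" "integrable N h2"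
  shows "\<bar>(\<integral>x. g x * h1 x \<partial>N) - (\<integral>x. g x * h2 x \<partial>N)\<bar> \<le> C * (\<integral>x. \<bar>h1 x - h2 x\<bar> \<partial>N)"
proof -
  have i: "integrable N (\<lambda>x. g x * h1 x)" "integrable N (\<lambda>x. g x * h2 x)" "integrable N (\<lambda>x. g x * (h1 x - h2 x))"
    using h g by (auto intro!: integrable_mult_bounded)
  have "\<bar>(\<integral>x. g x * h1 x \<partial>N) - (\<integral>x. g x * h2 x \<partial>N)\<bar> = \<bar>\<integral>x. g x * (h1 x - h2 x) \<partial>N\<bar>"
    using i by (simp add: right_diff_distrib)
  also have "\<dots> \<le> (\<integral>x. \<bar>g x * (h1 x - h2 x)\<bar> \<partial>N)" by (rule integral_abs_bound)
  also have "\<dots> \<le> (\<integral>x. C * \<bar>h1 x - h2 x\<bar> \<partial>N)"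
  proof (rule integral_mono)
    show "integrable N (\<lambda>x. \<bar>g x * (h1 x - h2 x)\<bar>)" using i(3) by simp
  qed (use h g(2) in \<open>auto simp: abs_mult intro: mult_right_mono\<close>)
  finally show ?thesis by simp
qed

lemma tendsto_if_L1_lipschitz:
  fixes s :: "nat \<Rightarrow> 'a \<Rightarrow> real" and \<Phi> :: "('a \<Rightarrow> real) \<Rightarrow> real"
  assumes "(\<lambda>i. \<integral>x. \<bar>s i x - f x\<bar> \<partial>N) \<longlonglongrightarrow> 0"
    and "\<And>i. \<bar>\<Phi> (s i) - \<Phi> f\<bar> \<le> C * (\<integral>x. \<bar>s i x - f x\<bar> \<partial>N)"
  shows "(\<lambda>i. \<Phi> (s i)) \<longlonglongrightarrow> \<Phi> f"
proof -
  have "(\<lambda>i. C * (\<integral>x. \<bar>s i x - f x\<bar> \<partial>N)) \<longlonglongrightarrow> C * 0"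
    by (intro tendsto_mult tendsto_const assms(1))
  hence "(\<lambda>i. C * (\<integral>x. \<bar>s i x - f x\<bar> \<partial>N)) \<longlonglongrightarrow> 0" by simp
  hence "(\<lambda>i. \<Phi> (s i) - \<Phi> f) \<longlonglongrightarrow> 0"
    by (rule Lim_null_comparison[rotated, OF _ always_eventually]) (use assms(2) in simp_all)
  thus ?thesis by (rule LIM_zero_cancel)
qed

context
  fixes M :: "'a measure" and Q :: "'a set \<Rightarrow> real" and \<Lambda> :: "('a set \<Rightarrow> real) \<Rightarrow> real" and C :: real
  assumes Q: "pos_measure M Q" and C: "0 \<le> C"
    and lin: "\<And>h1 h2 a b. integrable (to_measure M Q) h1 \<Longrightarrow> integrable (to_measure M Q) h2 \<Longrightarrow>
       \<Lambda> (signed_density M Q (\<lambda>x. a * h1 x + b * h2 x)) =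
         a * \<Lambda> (signed_density M Q h1) + b * \<Lambda> (signed_density M Q h2)"
    and bound: "\<And>h. integrable (to_measure M Q) h \<Longrightarrow>
       \<bar>\<Lambda> (signed_density M Q h)\<bar> \<le> C * (\<integral>x. \<bar>h x\<bar> \<partial>to_measure M Q)"
begin

definition functional_on_sets :: "'a set \<Rightarrow> real" where
  "functional_on_sets A = (if A \<in> sets M then \<Lambda> (signed_density M Q (indicator A)) else 0)"

lemma functional_on_sets_Un:
  assumes "A \<in> sets M" "B \<in> sets M" "A \<inter> B = {}"
  shows "functional_on_sets (A \<union> B) = functional_on_sets A + functional_on_sets B"
proof -
  have "(indicator (A \<union> B) :: 'a \<Rightarrow> real) = (\<lambda>x. 1 * indicator A x + 1 * indicator B x)"
    using assms(3) by (intro ext) (auto simp: indicator_def)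
  thus ?thesis
    using lin[OF integrable_indicator_to_measure[OF Q assms(1)] integrable_indicator_to_measure[OF Q assms(2)], of 1 1]
      assms by (simp add: functional_on_sets_def)
qed

lemma abs_functional_on_sets_le: "\<bar>functional_on_sets A\<bar> \<le> C * Q A"
  using bound[OF integrable_indicator_to_measure[OF Q]] integral_indicator_to_measure[OF Q]
    C pos_measure_nonneg[OF Q] by (simp add: functional_on_sets_def)

lemma signed_measure_functional_on_sets: "signed_measure M functional_on_sets"
  by (rule signed_measure_if_additive_dominated[where \<nu> = functional_on_sets,
        OF Q _ functional_on_sets_Un abs_functional_on_sets_le])
     (simp add: functional_on_sets_def)

lemma abs_cont_functional_on_sets: "abs_cont M functional_on_sets Q"
  unfolding abs_cont_def
proof safe
  fix A B assume A: "A \<in> sets M" "Q A = 0" and B: "B \<in> sets M" "B \<subseteq> A"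
  hence "Q B = 0" using pos_measure_null_subset[OF Q A(1) B] by simp
  thus "functional_on_sets B = 0" using abs_functional_on_sets_le[of B] by simp
qed

lemma functional_on_sets_bounded_density:
  obtains g where "g \<in> borel_measurable M" "\<And>x. \<bar>g x\<bar> \<le> C" "has_density M Q functional_on_sets g"
proof -
  obtain g0 where "has_density M Q functional_on_sets g0"
    using has_density_exists[OF signed_measure_functional_on_sets Q abs_cont_functional_on_sets] by blast
  then obtain g where "has_density M Q functional_on_sets g" "\<And>x. \<bar>g x\<bar> \<le> C"
    using has_density_bounded[OF Q _ C abs_functional_on_sets_le] by blast
  thus ?thesis using that unfolding has_density_def by blast
qed

lemma functional_dist_le:
  assumes "integrable (to_measure M Q) h1" "integrable (to_measure M Q) h2"
  shows "\<bar>\<Lambda> (signed_density M Q h1) - \<Lambda> (signed_density M Q h2)\<bar> \<le> C * (\<integral>x. \<bar>h1 x - h2 x\<bar> \<partial>to_measure M Q)"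
  using lin[OF assms, of 1 "-1"] bound[of "\<lambda>x. 1 * h1 x + (-1) * h2 x"] assms by simp

lemma L1_functional_representation:
  obtains g where "g \<in> borel_measurable M" "\<And>x. \<bar>g x\<bar> \<le> C"
    "\<And>h. integrable (to_measure M Q) h \<Longrightarrow> \<Lambda> (signed_density M Q h) = (\<integral>x. g x * h x \<partial>to_measure M Q)"
proof -
  obtain g where g[measurable]: "g \<in> borel_measurable M" and gC: "\<And>x. \<bar>g x\<bar> \<le> C"
    and gd: "has_density M Q functional_on_sets g"
    using functional_on_sets_bounded_density by blast
  have "\<Lambda> (signed_density M Q h) = (\<integral>x. g x * h x \<partial>to_measure M Q)"
    if "integrable (to_measure M Q) h" for h :: "'a \<Rightarrow> real"
    using that
  proof (induct rule: integrable_induct)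
    case (base A c)
    hence A: "A \<in> sets M" by simp
    have "(\<lambda>x. indicator A x *\<^sub>R c) = (\<lambda>x. c * indicator A x + 0 * indicator A x)"
      by (auto simp: fun_eq_iff)
    hence "\<Lambda> (signed_density M Q (\<lambda>x. indicator A x *\<^sub>R c)) = c * functional_on_sets A"
      using lin[OF integrable_indicator_to_measure[OF Q A] integrable_indicator_to_measure[OF Q A], of c 0] A
      by (simp add: functional_on_sets_def)
    also have "\<dots> = (\<integral>x. c * (g x * indicator A x) \<partial>to_measure M Q)"
      using gd A unfolding has_density_def by simp
    also have "\<dots> = (\<integral>x. g x * (indicator A x *\<^sub>R c) \<partial>to_measure M Q)"
      by (rule Bochner_Integration.integral_cong) auto
    finally show ?case .
  next
    case (add f h)
    have "\<Lambda> (signed_density M Q (\<lambda>x. f x + h x)) = \<Lambda> (signed_density M Q f) + \<Lambda> (signed_density M Q h)"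
      using lin[OF add(1,3), of 1 1] by simp
    thus ?case using add integrable_mult_bounded[OF add(1), of g C] integrable_mult_bounded[OF add(3), of g C] gC
      by (simp add: distrib_left)
  next
    case (lim f s)
    have L1: "(\<lambda>i. \<integral>x. \<bar>s i x - f x\<bar> \<partial>to_measure M Q) \<longlonglongrightarrow> 0"
      using lim borel_measurable_integrable by (intro dominated_tendsto_L1) auto
    have "(\<lambda>i. \<Lambda> (signed_density M Q (s i))) \<longlonglongrightarrow> \<Lambda> (signed_density M Q f)"
      by (rule tendsto_if_L1_lipschitz[OF L1 functional_dist_le[OF lim(1) lim(5)]])
    moreover have "(\<lambda>i. \<integral>x. g x * s i x \<partial>to_measure M Q) \<longlonglongrightarrow> (\<integral>x. g x * f x \<partial>to_measure M Q)"
      by (rule tendsto_if_L1_lipschitz[OF L1 integral_mult_bounded_dist_le[OF _ gC lim(1) lim(5)]]) simp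
    moreover have "(\<lambda>i. \<Lambda> (signed_density M Q (s i))) = (\<lambda>i. \<integral>x. g x * s i x \<partial>to_measure M Q)"
      using lim(2) by simp
    ultimately show ?case using LIMSEQ_unique by metis
  qed
  thus ?thesis using that g gC by blast
qed

end

section \<open>Integrating \<open>L\<^sup>\<infinity>(\<P>)\<close> against \<open>ca(co \<P>)\<close>\<close>

definition null_on_polar :: "'a measure \<Rightarrow> ('a set \<Rightarrow> real) set \<Rightarrow> ('a set \<Rightarrow> real) \<Rightarrow> bool" where
  "null_on_polar M \<P> \<rho> \<longleftrightarrow> (\<forall>N\<in>sets M. (\<forall>P\<in>\<P>. P N = 0) \<longrightarrow> \<rho> N = 0)"

lemma mem_mconv: "P \<in> \<P> \<Longrightarrow> P \<in> mconv \<P>"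
  unfolding mconv_def by (rule CollectI, rule exI[of _ "1::nat"], rule exI[of _ "\<lambda>_. 1"]) auto

lemma mconv_pos_measure:
  assumes "\<forall>P\<in>\<P>. prob_measure M P" and "R \<in> mconv \<P>"
  shows "pos_measure M R" "null_on_polar M \<P> R"
proof -
  obtain n c p where R: "R = (\<lambda>A. \<Sum>i<(n::nat). c i * p i A)" and cp: "\<forall>i<n. 0 \<le> c i \<and> p i \<in> \<P>"
    using assms(2) unfolding mconv_def by blast
  have "signed_measure M R" unfolding R
    using cp assms(1) by (intro signed_measure_sum) (auto simp: prob_measure_def)
  moreover have "0 \<le> R A" if "A \<in> sets M" for A
    unfolding R using cp assms(1) that by (auto intro!: sum_nonneg simp: prob_measure_def)
  ultimately show "pos_measure M R" unfolding pos_measure_def by auto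
  show "null_on_polar M \<P> R" unfolding null_on_polar_def R using cp by (auto intro!: sum.neutral)
qed

lemma ca_mconv_dominated:
  assumes "\<forall>P\<in>\<P>. prob_measure M P" and "\<mu> \<in> ca M (mconv \<P>)"
  obtains \<rho> where "pos_measure M \<rho>" "null_on_polar M \<P> \<rho>" "abs_cont M \<mu> \<rho>"
  using assms mconv_pos_measure[OF assms(1)] unfolding ca_def by blast

lemma ca_mconv_common_dominated:
  assumes "\<forall>P\<in>\<P>. prob_measure M P" and "\<mu> \<in> ca M (mconv \<P>)" "\<nu> \<in> ca M (mconv \<P>)"
  obtains \<rho> where "pos_measure M \<rho>" "null_on_polar M \<P> \<rho>" "abs_cont M \<mu> \<rho>" "abs_cont M \<nu> \<rho>"
proof -
  obtain R1 R2 where R: "R1 \<in> mconv \<P>" "R2 \<in> mconv \<P>" "abs_cont M \<mu> R1" "abs_cont M \<nu> R2"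
    using assms unfolding ca_def by blast
  note R1 = mconv_pos_measure[OF assms(1) R(1)] and R2 = mconv_pos_measure[OF assms(1) R(2)]
  show ?thesis
  proof
    show "pos_measure M (\<lambda>A. R1 A + R2 A)" by (rule pos_measure_add[OF R1(1) R2(1)])
    show "null_on_polar M \<P> (\<lambda>A. R1 A + R2 A)" using R1(2) R2(2) unfolding null_on_polar_def by auto
    show "abs_cont M \<mu> (\<lambda>A. R1 A + R2 A)" "abs_cont M \<nu> (\<lambda>A. R1 A + R2 A)"
      using R(3,4) pos_measure_nonneg[OF R1(1)] pos_measure_nonneg[OF R2(1)] unfolding abs_cont_def
      by (metis add_nonneg_eq_0_iff)+
  qed
qed

lemma qs_AE:
  assumes "qs M \<P> \<phi>" "pos_measure M \<rho>" "null_on_polar M \<P> \<rho>"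
  shows "AE x in to_measure M \<rho>. \<phi> x"
proof -
  obtain N where N: "N \<in> sets M" "\<forall>P\<in>\<P>. P N = 0" "{x\<in>space M. \<not> \<phi> x} \<subseteq> N"
    using assms(1) unfolding qs_def by blast
  have "N \<in> null_sets (to_measure M \<rho>)"
    using N assms(3) null_sets_to_measure[OF assms(2)] unfolding null_on_polar_def by auto
  thus ?thesis by (rule AE_I') (use N(3) in simp)
qed

lemma qs_mono: "qs M \<P> \<phi> \<Longrightarrow> (\<And>x. x \<in> space M \<Longrightarrow> \<phi> x \<Longrightarrow> \<psi> x) \<Longrightarrow> qs M \<P> \<psi>"
  unfolding qs_def by blast

lemma qs_conj:
  assumes "\<forall>P\<in>\<P>. pos_measure M P" "qs M \<P> \<phi>" "qs M \<P> \<psi>"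
  shows "qs M \<P> (\<lambda>x. \<phi> x \<and> \<psi> x)"
proof -
  obtain N1 N2 where N: "N1 \<in> sets M" "\<forall>P\<in>\<P>. P N1 = 0" "{x\<in>space M. \<not> \<phi> x} \<subseteq> N1"
    "N2 \<in> sets M" "\<forall>P\<in>\<P>. P N2 = 0" "{x\<in>space M. \<not> \<psi> x} \<subseteq> N2"
    using assms(2,3) unfolding qs_def by blast
  have "P (N1 \<union> N2) = 0" if "P \<in> \<P>" for P
  proof -
    have "P (N1 \<union> N2) \<le> P N1 + P (N2 - N1)"
      using signed_measure_Un[OF pos_measure_signed, of M P N1 "N2 - N1"] assms(1) that N by simp
    also have "P (N2 - N1) \<le> P N2" using assms(1) that N by (intro pos_measure_mono) auto
    finally show ?thesis using N that pos_measure_nonneg assms(1) by (metis add_0 antisym)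
  qed
  thus ?thesis unfolding qs_def using N by (intro bexI[of _ "N1 \<union> N2"]) auto
qed

lemma Linf_measurable: "f \<in> Linf M \<P> \<Longrightarrow> f \<in> borel_measurable M"
  unfolding Linf_def by auto

lemma Linf_AE_bounded:
  assumes "f \<in> Linf M \<P>" "pos_measure M \<rho>" "null_on_polar M \<P> \<rho>"
  obtains K where "AE x in to_measure M \<rho>. \<bar>f x\<bar> \<le> K"
  using assms qs_AE unfolding Linf_def by blast

lemma Linf_lin:
  assumes "\<forall>P\<in>\<P>. pos_measure M P" "f \<in> Linf M \<P>" "g \<in> Linf M \<P>"
  shows "(\<lambda>x. a * f x + b * g x) \<in> Linf M \<P>"
proof -
  obtain K1 K2 where "qs M \<P> (\<lambda>x. \<bar>f x\<bar> \<le> K1)" "qs M \<P> (\<lambda>x. \<bar>g x\<bar> \<le> K2)"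
    using assms(2,3) unfolding Linf_def by blast
  hence "qs M \<P> (\<lambda>x. \<bar>f x\<bar> \<le> K1 \<and> \<bar>g x\<bar> \<le> K2)" by (rule qs_conj[OF assms(1)])
  hence "qs M \<P> (\<lambda>x. \<bar>a * f x + b * g x\<bar> \<le> \<bar>a\<bar> * K1 + \<bar>b\<bar> * K2)"
  proof (rule qs_mono)
    fix x assume "\<bar>f x\<bar> \<le> K1 \<and> \<bar>g x\<bar> \<le> K2"
    have "\<bar>a * f x + b * g x\<bar> \<le> \<bar>a\<bar> * \<bar>f x\<bar> + \<bar>b\<bar> * \<bar>g x\<bar>" by (metis abs_mult abs_triangle_ineq)
    also have "\<dots> \<le> \<bar>a\<bar> * K1 + \<bar>b\<bar> * K2" using \<open>\<bar>f x\<bar> \<le> K1 \<and> \<bar>g x\<bar> \<le> K2\<close> by (intro add_mono mult_left_mono) auto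
    finally show "\<bar>a * f x + b * g x\<bar> \<le> \<bar>a\<bar> * K1 + \<bar>b\<bar> * K2" .
  qed
  moreover have "(\<lambda>x. a * f x + b * g x) \<in> borel_measurable M"
    using Linf_measurable[OF assms(2)] Linf_measurable[OF assms(3)] by measurable
  ultimately show ?thesis unfolding Linf_def by blast
qed

context
  fixes M :: "'a measure" and \<P> :: "('a set \<Rightarrow> real) set"
  assumes prob: "\<forall>P\<in>\<P>. prob_measure M P"
begin

lemma pos_measure_P: "\<forall>P\<in>\<P>. pos_measure M P"
  using prob prob_measure_pos by blast

lemma signed_integral_lin_measure:
  assumes f: "f \<in> Linf M \<P>" and \<mu>: "\<mu> \<in> ca M (mconv \<P>)" and \<nu>: "\<nu> \<in> ca M (mconv \<P>)"
  shows "signed_integral M f (\<lambda>A. a * \<mu> A + b * \<nu> A) = a * signed_integral M f \<mu> + b * signed_integral M f \<nu>"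
proof -
  obtain \<rho> where \<rho>: "pos_measure M \<rho>" "null_on_polar M \<P> \<rho>" "abs_cont M \<mu> \<rho>" "abs_cont M \<nu> \<rho>"
    using ca_mconv_common_dominated[OF prob \<mu> \<nu>] by blast
  have sm: "signed_measure M \<mu>" "signed_measure M \<nu>" using \<mu> \<nu> unfolding ca_def by auto
  obtain K where K: "AE x in to_measure M \<rho>. \<bar>f x\<bar> \<le> K" using Linf_AE_bounded[OF f \<rho>(1,2)] by blast
  obtain h1 where h1: "has_density M \<rho> \<mu> h1"
    using has_density_exists[OF sm(1) \<rho>(1,3)] by blast
  obtain h2 where h2: "has_density M \<rho> \<nu> h2"
    using has_density_exists[OF sm(2) \<rho>(1,4)] by blast
  have "has_density M \<rho> (\<lambda>A. a * \<mu> A + b * \<nu> A) (\<lambda>x. a * h1 x + b * h2 x)"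
  proof -
    have "signed_density M \<rho> (\<lambda>x. a * h1 x + b * h2 x) A = a * \<mu> A + b * \<nu> A" if "A \<in> sets M" for A
      using h1 h2 that signed_density_lin[of M \<rho> h1 h2 a b] unfolding has_density_def
      by (simp add: signed_density_def)
    moreover have "integrable (to_measure M \<rho>) (\<lambda>x. a * h1 x + b * h2 x)"
      using h1 h2 unfolding has_density_def by auto
    note has_density_signed_density[OF \<rho>(1) this]
    ultimately show ?thesis unfolding has_density_def by simp
  qed
  moreover have "abs_cont M (\<lambda>A. a * \<mu> A + b * \<nu> A) \<rho>" using \<rho>(3,4) unfolding abs_cont_def by auto
  moreover note f' = Linf_measurable[OF f]
  note I1 = signed_integral_eq_density[OF sm(1) \<rho>(1,3) h1 f' K]
    and I2 = signed_integral_eq_density[OF sm(2) \<rho>(1,4) h2 f' K]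
  ultimately have "signed_integral M f (\<lambda>A. a * \<mu> A + b * \<nu> A) =
      (\<integral>x. a * (h1 x * f x) + b * (h2 x * f x) \<partial>to_measure M \<rho>)"
    using signed_integral_eq_density(1)[OF signed_measure_lin[OF sm] \<rho>(1) _ _ f' K]
    by (simp add: algebra_simps)
  also have "\<dots> = a * signed_integral M f \<mu> + b * signed_integral M f \<nu>"
    unfolding I1(1) I2(1) using I1(2) I2(2) by simp
  finally show ?thesis .
qed

lemma signed_integral_lin_fun:
  assumes f: "f \<in> Linf M \<P>" and g: "g \<in> Linf M \<P>" and \<mu>: "\<mu> \<in> ca M (mconv \<P>)"
  shows "signed_integral M (\<lambda>x. a * f x + b * g x) \<mu> = a * signed_integral M f \<mu> + b * signed_integral M g \<mu>"
proof -
  obtain \<rho> where \<rho>: "pos_measure M \<rho>" "null_on_polar M \<P> \<rho>" "abs_cont M \<mu> \<rho>"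
    using ca_mconv_dominated[OF prob \<mu>] by blast
  have sm: "signed_measure M \<mu>" using \<mu> unfolding ca_def by auto
  obtain h where h: "has_density M \<rho> \<mu> h" using has_density_exists[OF sm \<rho>(1,3)] by blast
  have integral: "signed_integral M u \<mu> = (\<integral>x. h x * u x \<partial>to_measure M \<rho>) \<and>
      integrable (to_measure M \<rho>) (\<lambda>x. h x * u x)" if "u \<in> Linf M \<P>" for u
    using Linf_AE_bounded[OF that \<rho>(1,2)] signed_integral_eq_density[OF sm \<rho>(1,3) h Linf_measurable[OF that]]
    by metis
  from integral[OF Linf_lin[OF pos_measure_P f g]] integral[OF f] integral[OF g] show ?thesis
    by (simp add: algebra_simps)
qed

lemma signed_integral_abs_le_qs:
  assumes f: "f \<in> borel_measurable M" and K: "qs M \<P> (\<lambda>x. \<bar>f x\<bar> \<le> K)" and \<mu>: "\<mu> \<in> ca M (mconv \<P>)"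
  shows "\<bar>signed_integral M f \<mu>\<bar> \<le> K * tv_norm M \<mu>"
proof -
  obtain \<rho> where \<rho>: "pos_measure M \<rho>" "null_on_polar M \<P> \<rho>" "abs_cont M \<mu> \<rho>"
    using ca_mconv_dominated[OF prob \<mu>] by blast
  show ?thesis using \<mu> unfolding ca_def
    by (intro signed_integral_abs_le[OF _ \<rho>(1,3) f qs_AE[OF K \<rho>(1,2)]]) simp
qed

lemma ca_dual_signed_integral:
  assumes f: "f \<in> Linf M \<P>"
  shows "ca_dual M (mconv \<P>) (signed_integral M f)"
proof -
  obtain K where "qs M \<P> (\<lambda>x. \<bar>f x\<bar> \<le> K)" using f unfolding Linf_def by blast
  thus ?thesis unfolding ca_dual_def
    using signed_integral_lin_measure[OF f] signed_integral_abs_le_qs[OF Linf_measurable[OF f]] by blast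
qed

lemma signed_integral_indicator_density:
  assumes P: "P \<in> \<P>" and D: "D \<in> sets M" and f: "f \<in> Linf M \<P>"
  shows "signed_density M P (indicator D) \<in> ca M (mconv \<P>)"
    and "signed_integral M f (signed_density M P (indicator D)) = (\<integral>x. indicator D x * f x \<partial>to_measure M P)"
    and "integrable (to_measure M P) (\<lambda>x. indicator D x * f x)"
    and "tv_norm M (signed_density M P (indicator D)) \<le> P D"
proof -
  have pP: "pos_measure M P" using pos_measure_P P by blast
  have "null_on_polar M \<P> P" using P unfolding null_on_polar_def by auto
  then obtain K where K: "AE x in to_measure M P. \<bar>f x\<bar> \<le> K" using Linf_AE_bounded[OF f pP] by blast
  note ind = integrable_indicator_to_measure[OF pP D]
  note sm = signed_measure_signed_density[OF pP ind] and ac = abs_cont_signed_density[OF pP ind]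
  show "signed_density M P (indicator D) \<in> ca M (mconv \<P>)"
    unfolding ca_def using sm ac mem_mconv[OF P] by blast
  note I = signed_integral_eq_density[OF sm pP ac has_density_signed_density[OF pP ind] Linf_measurable[OF f] K]
  show "signed_integral M f (signed_density M P (indicator D)) = (\<integral>x. indicator D x * f x \<partial>to_measure M P)"
    by (rule I(1))
  show "integrable (to_measure M P) (\<lambda>x. indicator D x * f x)" by (rule I(2))
  show "tv_norm M (signed_density M P (indicator D)) \<le> P D"
    using tv_norm_signed_density_le[OF pP ind] integral_indicator_to_measure[OF pP D] by simp
qed

lemma qs_le_if_integral_le:
  assumes f: "f \<in> Linf M \<P>"
    and le: "\<And>P D. P \<in> \<P> \<Longrightarrow> D \<in> sets M \<Longrightarrow> (\<integral>x. indicator D x * f x \<partial>to_measure M P) \<le> c * P D"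
  shows "qs M \<P> (\<lambda>x. f x \<le> c)"
proof -
  define D where "D = {x \<in> space M. c < f x}"
  have D: "D \<in> sets M" unfolding D_def using Linf_measurable[OF f] by measurable
  have "P D = 0" if P: "P \<in> \<P>" for P
  proof (rule null_if_integral_nonpos[where u = "\<lambda>x. f x - c"])
    show pP: "pos_measure M P" using pos_measure_P P by blast
    have fi: "integrable (to_measure M P) (\<lambda>x. indicator D x * f x)"
      by (rule signed_integral_indicator_density(3)[OF P D f])
    have ci: "integrable (to_measure M P) (\<lambda>x. c * indicator D x)"
      using integrable_indicator_to_measure[OF pP D] by simp
    show "integrable (to_measure M P) (\<lambda>x. indicator D x * (f x - c))"
      using fi ci by (simp add: right_diff_distrib mult.commute)
    have "(\<integral>x. indicator D x * (f x - c) \<partial>to_measure M P) =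
        (\<integral>x. indicator D x * f x \<partial>to_measure M P) - c * P D"
      using fi ci integral_indicator_to_measure[OF pP D] by (simp add: right_diff_distrib mult.commute)
    thus "(\<integral>x. indicator D x * (f x - c) \<partial>to_measure M P) \<le> 0" using le[OF P D] by simp
  qed (use D in \<open>auto simp: D_def\<close>)
  thus ?thesis unfolding qs_def using D by (intro bexI[of _ D]) (auto simp: D_def)
qed

lemma signed_integral_cong_qs:
  assumes f: "f \<in> Linf M \<P>" and g: "g \<in> Linf M \<P>" and fg: "qs M \<P> (\<lambda>x. f x = g x)"
    and \<mu>: "\<mu> \<in> ca M (mconv \<P>)"
  shows "signed_integral M f \<mu> = signed_integral M g \<mu>"
proof -
  obtain \<rho> where \<rho>: "pos_measure M \<rho>" "null_on_polar M \<P> \<rho>" "abs_cont M \<mu> \<rho>"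
    using ca_mconv_dominated[OF prob \<mu>] by blast
  have sm: "signed_measure M \<mu>" using \<mu> unfolding ca_def by auto
  obtain h where h: "has_density M \<rho> \<mu> h" using has_density_exists[OF sm \<rho>(1,3)] by blast
  obtain K1 where K1: "AE x in to_measure M \<rho>. \<bar>f x\<bar> \<le> K1" using Linf_AE_bounded[OF f \<rho>(1,2)] by blast
  obtain K2 where K2: "AE x in to_measure M \<rho>. \<bar>g x\<bar> \<le> K2" using Linf_AE_bounded[OF g \<rho>(1,2)] by blast
  have m: "(\<lambda>x. h x * f x) \<in> borel_measurable M" "(\<lambda>x. h x * g x) \<in> borel_measurable M"
    using h Linf_measurable[OF f] Linf_measurable[OF g] unfolding has_density_def by auto
  have ae: "AE x in to_measure M \<rho>. h x * f x = h x * g x"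
    using qs_AE[OF fg \<rho>(1,2)] by eventually_elim simp
  show ?thesis
    unfolding signed_integral_eq_density(1)[OF sm \<rho>(1,3) h Linf_measurable[OF f] K1]
      signed_integral_eq_density(1)[OF sm \<rho>(1,3) h Linf_measurable[OF g] K2]
    by (rule integral_cong_AE) (use m ae in simp_all)
qed

lemma signed_integral_eq_iff_qs:
  assumes f: "f \<in> Linf M \<P>" and g: "g \<in> Linf M \<P>"
  shows "(\<forall>\<mu>\<in>ca M (mconv \<P>). signed_integral M f \<mu> = signed_integral M g \<mu>) \<longleftrightarrow> qs M \<P> (\<lambda>x. f x = g x)"
proof
  assume "qs M \<P> (\<lambda>x. f x = g x)"
  thus "\<forall>\<mu>\<in>ca M (mconv \<P>). signed_integral M f \<mu> = signed_integral M g \<mu>"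
    using signed_integral_cong_qs[OF f g] by blast
next
  assume eq: "\<forall>\<mu>\<in>ca M (mconv \<P>). signed_integral M f \<mu> = signed_integral M g \<mu>"
  have le: "qs M \<P> (\<lambda>x. u x - v x \<le> 0)"
    if u: "u \<in> Linf M \<P>" and v: "v \<in> Linf M \<P>"
      and uv: "\<forall>\<mu>\<in>ca M (mconv \<P>). signed_integral M u \<mu> = signed_integral M v \<mu>" for u v
  proof (rule qs_le_if_integral_le)
    show uv': "(\<lambda>x. u x - v x) \<in> Linf M \<P>"
      using Linf_lin[OF pos_measure_P u v, of 1 "-1"] by simp
    fix P D assume P: "P \<in> \<P>" and D: "D \<in> sets M"
    note T = signed_integral_indicator_density[OF P D]
    have "(\<integral>x. indicator D x * (u x - v x) \<partial>to_measure M P) = 0"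
      using signed_integral_lin_fun[OF u v T(1)[OF u], of 1 "-1"] uv T(1)[OF u] T(2)[OF uv'] by simp
    thus "(\<integral>x. indicator D x * (u x - v x) \<partial>to_measure M P) \<le> 0 * P D" by simp
  qed
  have "qs M \<P> (\<lambda>x. f x - g x \<le> 0 \<and> g x - f x \<le> 0)"
    using le[OF f g eq] le[OF g f] eq by (intro qs_conj[OF pos_measure_P]) auto
  thus "qs M \<P> (\<lambda>x. f x = g x)" by (rule qs_mono) simp
qed

lemma qs_abs_le_if_dual_bound:
  assumes f: "f \<in> Linf M \<P>" and c: "0 \<le> c"
    and bound: "\<And>\<mu>. \<mu> \<in> ca M (mconv \<P>) \<Longrightarrow> \<bar>signed_integral M f \<mu>\<bar> \<le> c * tv_norm M \<mu>"
  shows "qs M \<P> (\<lambda>x. \<bar>f x\<bar> \<le> c)"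
proof -
  have test: "\<bar>\<integral>x. indicator D x * f x \<partial>to_measure M P\<bar> \<le> c * P D" if "P \<in> \<P>" "D \<in> sets M" for P D
    using bound[OF signed_integral_indicator_density(1)[OF that f]] c
      signed_integral_indicator_density(2,4)[OF that f] by (metis mult_left_mono order_trans)
  have "qs M \<P> (\<lambda>x. f x \<le> c)"
    using test by (intro qs_le_if_integral_le[OF f]) (simp add: abs_le_iff)
  moreover have "qs M \<P> (\<lambda>x. - f x \<le> c)"
    using test Linf_lin[OF pos_measure_P f f, of "-1" 0]
    by (intro qs_le_if_integral_le) (simp_all add: abs_le_iff)
  ultimately have "qs M \<P> (\<lambda>x. f x \<le> c \<and> - f x \<le> c)" by (rule qs_conj[OF pos_measure_P])
  thus ?thesis by (rule qs_mono) (simp add: abs_le_iff)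
qed

lemma dual_norm_signed_integral:
  assumes f: "f \<in> Linf M \<P>"
  shows "dual_norm M (mconv \<P>) (signed_integral M f) = Linf_norm M \<P> f"
proof -
  define S1 where "S1 = {C. 0 < C \<and> qs M \<P> (\<lambda>x. \<bar>f x\<bar> \<le> C)}"
  define S2 where "S2 = {C. 0 \<le> C \<and> (\<forall>\<mu>\<in>ca M (mconv \<P>). \<bar>signed_integral M f \<mu>\<bar> \<le> C * tv_norm M \<mu>)}"
  have sub: "S1 \<subseteq> S2" unfolding S1_def S2_def using signed_integral_abs_le_qs[OF Linf_measurable[OF f]] by auto
  obtain K where "qs M \<P> (\<lambda>x. \<bar>f x\<bar> \<le> K)" using f unfolding Linf_def by blast
  hence "qs M \<P> (\<lambda>x. \<bar>f x\<bar> \<le> max K 0 + 1)" by (rule qs_mono) simp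
  hence "max K 0 + 1 \<in> S1" unfolding S1_def by simp
  hence ne1: "S1 \<noteq> {}" by blast
  have b1: "bdd_below S1" unfolding S1_def bdd_below_def by (intro exI[of _ 0]) auto
  have b2: "bdd_below S2" unfolding S2_def bdd_below_def by (intro exI[of _ 0]) auto
  have "Inf S2 \<le> Inf S1" by (rule cInf_superset_mono[OF ne1 b2 sub])
  moreover have "Inf S1 \<le> Inf S2"
  proof (rule cInf_greatest)
    show "S2 \<noteq> {}" using ne1 sub by blast
    fix c assume c: "c \<in> S2"
    hence q: "qs M \<P> (\<lambda>x. \<bar>f x\<bar> \<le> c)" unfolding S2_def by (intro qs_abs_le_if_dual_bound[OF f]) auto
    have S1e: "c + e \<in> S1" if "0 < e" for e
    proof -
      have "qs M \<P> (\<lambda>x. \<bar>f x\<bar> \<le> c + e)" by (rule qs_mono[OF q]) (use that in simp)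
      thus ?thesis using that c unfolding S1_def S2_def by simp
    qed
    show "Inf S1 \<le> c"
    proof (rule field_le_epsilon)
      fix e :: real assume "0 < e"
      thus "Inf S1 \<le> c + e" using S1e by (intro cInf_lower b1)
    qed
  qed
  ultimately show ?thesis unfolding dual_norm_def Linf_norm_def S1_def S2_def by simp
qed

end

definition restr_measure :: "'a measure \<Rightarrow> ('a set \<Rightarrow> real) \<Rightarrow> 'a set \<Rightarrow> 'a set \<Rightarrow> real" where
  "restr_measure M \<mu> D B = (if B \<in> sets M then \<mu> (D \<inter> B) else 0)"

lemma signed_measure_restr:
  assumes sm: "signed_measure M \<mu>" and D: "D \<in> sets M"
  shows "signed_measure M (restr_measure M \<mu> D)"
  unfolding signed_measure_def
proof safe
  fix A :: "nat \<Rightarrow> 'a set" assume "disjoint_family A" "range A \<subseteq> sets M"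
  moreover from this have "(\<lambda>n. \<mu> (D \<inter> A n)) sums \<mu> (\<Union>n. D \<inter> A n)"
    using D by (intro signed_measure_sums[OF sm]) (auto simp: disjoint_family_on_def)
  ultimately show "(\<lambda>n. restr_measure M \<mu> D (A n)) sums restr_measure M \<mu> D (\<Union> (range A))"
    by (auto simp: restr_measure_def)
qed (simp add: restr_measure_def)

lemma restr_measure_ca:
  assumes "\<mu> \<in> ca M \<R>" "D \<in> sets M"
  shows "restr_measure M \<mu> D \<in> ca M \<R>"
proof -
  obtain R where "R \<in> \<R>" "abs_cont M \<mu> R" and sm: "signed_measure M \<mu>" using assms(1) unfolding ca_def by blast
  moreover from this have "abs_cont M (restr_measure M \<mu> D) R"
    using assms(2) unfolding abs_cont_def restr_measure_def by (meson Int_lower2 order_trans sets.Int)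
  ultimately show ?thesis unfolding ca_def using signed_measure_restr[OF sm assms(2)] by blast
qed

lemma restr_measure_space: "signed_measure M \<mu> \<Longrightarrow> restr_measure M \<mu> (space M) = \<mu>"
  by (auto simp: restr_measure_def fun_eq_iff Int_absorb1 sets.sets_into_space signed_measure_notin_sets)

lemma restr_measure_Un:
  assumes sm: "signed_measure M \<mu>" and "D \<in> sets M" "E \<in> sets M" "D \<inter> E = {}"
  shows "restr_measure M \<mu> (D \<union> E) = (\<lambda>B. restr_measure M \<mu> D B + restr_measure M \<mu> E B)"
proof
  fix B
  show "restr_measure M \<mu> (D \<union> E) B = restr_measure M \<mu> D B + restr_measure M \<mu> E B"
  proof (cases "B \<in> sets M")
    case True
    have "\<mu> ((D \<inter> B) \<union> (E \<inter> B)) = \<mu> (D \<inter> B) + \<mu> (E \<inter> B)"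
      using assms True by (intro signed_measure_Un[OF sm]) auto
    thus ?thesis using True by (simp add: restr_measure_def Int_Un_distrib2)
  qed (simp add: restr_measure_def)
qed

lemma tv_norm_restr_le:
  assumes sm: "signed_measure M \<mu>" and E: "E \<in> sets M"
  shows "tv_norm M (restr_measure M \<mu> E) \<le> jordan_pos M \<mu> E + jordan_neg M \<mu> E"
proof -
  define \<nu> where "\<nu> A = jordan_pos M \<mu> A + jordan_neg M \<mu> A" for A
  have \<nu>: "pos_measure M \<nu>" unfolding \<nu>_def by (intro pos_measure_add pos_measure_jordan_pos pos_measure_jordan_neg sm)
  have "tv_norm M (restr_measure M \<mu> E) \<le> restr_measure M \<nu> E (space M)"
  proof (rule tv_norm_le)
    show "pos_measure M (restr_measure M \<nu> E)"
      using signed_measure_restr[OF pos_measure_signed[OF \<nu>] E] pos_measure_nonneg[OF \<nu>]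
      unfolding pos_measure_def restr_measure_def by auto
  qed (simp add: restr_measure_def \<nu>_def abs_le_jordan[OF sm])
  thus ?thesis using E sets.sets_into_space by (simp add: restr_measure_def \<nu>_def Int_absorb1)
qed

lemma signed_measure_tendsto_Diff_UN:
  fixes D :: "nat \<Rightarrow> 'a set"
  assumes \<nu>: "signed_measure M \<nu>" and D: "\<And>k. D k \<in> sets M" "disjoint_family D"
  shows "(\<lambda>m. \<nu> (space M - (\<Union>k<m. D k))) \<longlonglongrightarrow> \<nu> (space M - (\<Union>k. D k))"
proof -
  have "\<nu> (space M - (\<Union>k<m. D k)) = \<nu> (space M) - (\<Sum>k<m. \<nu> (D k))" for m
    using D sets.sets_into_space
    by (subst signed_measure_Diff[OF \<nu>]) (auto simp: signed_measure_UN_lessThan[OF \<nu> D])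
  moreover have "(\<lambda>m. \<nu> (space M) - (\<Sum>k<m. \<nu> (D k))) \<longlonglongrightarrow> \<nu> (space M) - \<nu> (\<Union>k. D k)"
    using signed_measure_sums[OF \<nu> D(2)] D(1) unfolding sums_def by (intro tendsto_intros) auto
  moreover have "\<nu> (space M) - \<nu> (\<Union>k. D k) = \<nu> (space M - (\<Union>k. D k))"
    using D sets.sets_into_space by (intro signed_measure_Diff[OF \<nu>, symmetric]) auto
  ultimately show ?thesis by simp
qed

text \<open>A functional that is additive and bounded by the total variation is countably additive
  along a partition: the variation left over after the first \<open>m\<close> pieces tends to zero.\<close>

lemma bounded_additive_eq_0:
  fixes D :: "nat \<Rightarrow> 'a set"
  assumes sm: "signed_measure M \<mu>"
    and restr: "\<And>E. E \<in> sets M \<Longrightarrow> restr_measure M \<mu> E \<in> \<C>"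
    and add: "\<And>\<nu>1 \<nu>2. \<nu>1 \<in> \<C> \<Longrightarrow> \<nu>2 \<in> \<C> \<Longrightarrow> L (\<lambda>A. \<nu>1 A + \<nu>2 A) = L \<nu>1 + L \<nu>2"
    and bound: "\<And>\<nu>. \<nu> \<in> \<C> \<Longrightarrow> \<bar>L \<nu>\<bar> \<le> K * tv_norm M \<nu>" and K: "0 \<le> K"
    and D: "\<And>k. D k \<in> sets M" "disjoint_family D"
    and pieces: "\<And>k. L (restr_measure M \<mu> (D k)) = 0"
    and null: "\<And>B. B \<in> sets M \<Longrightarrow> B \<subseteq> space M - (\<Union>k. D k) \<Longrightarrow> \<mu> B = 0"
  shows "L \<mu> = 0"
proof -
  define E where "E m = space M - (\<Union>k<m. D k)" for m
  have E: "E m \<in> sets M" for m unfolding E_def using D by auto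
  have L_E: "L \<mu> = L (restr_measure M \<mu> (E m))" for m
  proof (induction m)
    case 0 thus ?case by (simp add: E_def restr_measure_space[OF sm])
  next
    case (Suc m)
    have "D k \<inter> D m = {}" if "k < m" for k using D(2) that unfolding disjoint_family_on_def by simp
    hence "E m = E (Suc m) \<union> D m" "E (Suc m) \<inter> D m = {}"
      using sets.sets_into_space[OF D(1)[of m]] by (auto simp: E_def lessThan_Suc)
    hence "L (restr_measure M \<mu> (E m)) = L (restr_measure M \<mu> (E (Suc m))) + L (restr_measure M \<mu> (D m))"
      using restr_measure_Un[OF sm E D(1)] add[OF restr[OF E] restr[OF D(1)]] by metis
    thus ?case using Suc pieces by simp
  qed
  define \<nu> where "\<nu> A = jordan_pos M \<mu> A + jordan_neg M \<mu> A" for A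
  have \<nu>: "signed_measure M \<nu>"
    unfolding \<nu>_def by (intro pos_measure_signed pos_measure_add pos_measure_jordan_pos pos_measure_jordan_neg sm)
  have "(\<lambda>m. \<nu> (E m)) \<longlonglongrightarrow> \<nu> (space M - (\<Union>k. D k))"
    unfolding E_def by (rule signed_measure_tendsto_Diff_UN[OF \<nu> D])
  moreover have "\<nu> (space M - (\<Union>k. D k)) = 0"
    using jordan_null[OF sm null] unfolding \<nu>_def by simp
  ultimately have "(\<lambda>m. K * \<nu> (E m)) \<longlonglongrightarrow> K * 0" by (intro tendsto_intros) simp
  moreover have "\<bar>L \<mu>\<bar> \<le> K * \<nu> (E m)" for m
    using L_E[of m] bound[OF restr[OF E]] tv_norm_restr_le[OF sm E] K unfolding \<nu>_def
    by (metis mult_left_mono order_trans)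
  ultimately have "\<bar>L \<mu>\<bar> \<le> 0" using LIMSEQ_le_const by force
  thus ?thesis by simp
qed

lemma abs_cont_trans: "abs_cont M \<mu> Q \<Longrightarrow> abs_cont M Q P \<Longrightarrow> abs_cont M \<mu> P"
  unfolding abs_cont_def by blast

lemma ca_dual_density_representation:
  assumes \<Lambda>: "ca_dual M (mconv \<P>) \<Lambda>" and bound: "\<forall>\<mu>\<in>ca M (mconv \<P>). \<bar>\<Lambda> \<mu>\<bar> \<le> C * tv_norm M \<mu>"
    and C: "0 \<le> C" and Q: "pos_measure M Q" and P: "P \<in> \<P>" "abs_cont M Q P"
  obtains g where "g \<in> borel_measurable M" "\<And>x. \<bar>g x\<bar> \<le> C"
    "\<And>h. integrable (to_measure M Q) h \<Longrightarrow> \<Lambda> (signed_density M Q h) = (\<integral>x. g x * h x \<partial>to_measure M Q)"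
proof -
  have ca: "signed_density M Q h \<in> ca M (mconv \<P>)" if "integrable (to_measure M Q) h" for h
    unfolding ca_def using signed_measure_signed_density[OF Q that] mem_mconv[OF P(1)]
      abs_cont_trans[OF abs_cont_signed_density[OF Q that] P(2)] by blast
  show ?thesis
  proof (rule L1_functional_representation[OF Q C])
    fix h1 h2 :: "'a \<Rightarrow> real" and a b :: real
    assume h: "integrable (to_measure M Q) h1" "integrable (to_measure M Q) h2"
    have "\<Lambda> (\<lambda>A. a * signed_density M Q h1 A + b * signed_density M Q h2 A) =
        a * \<Lambda> (signed_density M Q h1) + b * \<Lambda> (signed_density M Q h2)"
      using \<Lambda> ca[OF h(1)] ca[OF h(2)] unfolding ca_dual_def by blast
    thus "\<Lambda> (signed_density M Q (\<lambda>x. a * h1 x + b * h2 x)) =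
        a * \<Lambda> (signed_density M Q h1) + b * \<Lambda> (signed_density M Q h2)"
      by (simp add: signed_density_lin[OF h])
  next
    fix h :: "'a \<Rightarrow> real" assume h: "integrable (to_measure M Q) h"
    have "C * tv_norm M (signed_density M Q h) \<le> C * (\<integral>x. \<bar>h x\<bar> \<partial>to_measure M Q)"
      using tv_norm_signed_density_le[OF Q h] C by (rule mult_left_mono)
    moreover note ca[OF h]
    ultimately show "\<bar>\<Lambda> (signed_density M Q h)\<bar> \<le> C * (\<integral>x. \<bar>h x\<bar> \<partial>to_measure M Q)"
      using bound by fastforce
  qed (rule that)
qed

lemma sconv_null_family:
  assumes "T \<in> sconv \<Q>"
  obtains \<Q>' where "countable \<Q>'" "\<Q>' \<noteq> {}" "\<Q>' \<subseteq> \<Q>" "\<And>A. \<forall>Q\<in>\<Q>'. Q A = 0 \<Longrightarrow> T A = 0"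
proof -
  obtain d q where "T = (\<lambda>A. \<Sum>j. d j * q j A)" "\<forall>j. q j \<in> \<Q>"
    using assms unfolding sconv_def by blast
  thus ?thesis using that[of "range q"] by auto
qed

lemma ca_mconv_null_family:
  assumes dom: "dominated M \<P> (sconv \<Q>)" and \<mu>: "\<mu> \<in> ca M (mconv \<P>)"
  obtains \<Q>' where "countable \<Q>'" "\<Q>' \<noteq> {}" "\<Q>' \<subseteq> \<Q>"
    "\<And>A B. A \<in> sets M \<Longrightarrow> \<forall>Q\<in>\<Q>'. Q A = 0 \<Longrightarrow> B \<in> sets M \<Longrightarrow> B \<subseteq> A \<Longrightarrow> \<mu> B = 0"
proof -
  obtain R where R: "R \<in> mconv \<P>" "abs_cont M \<mu> R" using \<mu> unfolding ca_def by blast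
  then obtain n c p where R_eq: "R = (\<lambda>A. \<Sum>i<(n::nat). c i * p i A)" and p: "\<forall>i<n. p i \<in> \<P>"
    and c: "(\<Sum>i<n. c i) = 1"
    unfolding mconv_def by blast
  have "\<forall>i\<in>{..<n}. \<exists>\<Q>'. countable \<Q>' \<and> \<Q>' \<noteq> {} \<and> \<Q>' \<subseteq> \<Q> \<and>
      (\<forall>A\<in>sets M. (\<forall>Q\<in>\<Q>'. Q A = 0) \<longrightarrow> p i A = 0)"
  proof
    fix i assume "i \<in> {..<n}"
    then obtain T where T: "T \<in> sconv \<Q>" "abs_cont M (p i) T" using dom p unfolding dominated_def by auto
    obtain \<Q>' where \<Q>': "countable \<Q>'" "\<Q>' \<noteq> {}" "\<Q>' \<subseteq> \<Q>"
      and null: "\<And>A. \<forall>Q\<in>\<Q>'. Q A = 0 \<Longrightarrow> T A = 0"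
      using sconv_null_family[OF T(1)] by blast
    have "\<forall>A\<in>sets M. (\<forall>Q\<in>\<Q>'. Q A = 0) \<longrightarrow> p i A = 0"
      using T(2) null unfolding abs_cont_def by blast
    with \<Q>' show "\<exists>\<Q>'. countable \<Q>' \<and> \<Q>' \<noteq> {} \<and> \<Q>' \<subseteq> \<Q> \<and>
        (\<forall>A\<in>sets M. (\<forall>Q\<in>\<Q>'. Q A = 0) \<longrightarrow> p i A = 0)" by blast
  qed
  from bchoice[OF this] obtain \<Q>i where \<Q>i: "\<forall>i\<in>{..<n}. countable (\<Q>i i) \<and> \<Q>i i \<noteq> {} \<and>
      \<Q>i i \<subseteq> \<Q> \<and> (\<forall>A\<in>sets M. (\<forall>Q\<in>\<Q>i i. Q A = 0) \<longrightarrow> p i A = 0)"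
    by blast
  show ?thesis
  proof
    show "countable (\<Union>i<n. \<Q>i i)" using \<Q>i by auto
    have "n \<noteq> 0" using c by (cases n) auto
    thus "(\<Union>i<n. \<Q>i i) \<noteq> {}" using \<Q>i by auto
    show "(\<Union>i<n. \<Q>i i) \<subseteq> \<Q>" using \<Q>i by auto
    fix A B assume A: "A \<in> sets M" "\<forall>Q\<in>(\<Union>i<n. \<Q>i i). Q A = 0" and B: "B \<in> sets M" "B \<subseteq> A"
    have "R A = 0" unfolding R_eq using \<Q>i A by auto
    thus "\<mu> B = 0" using R(2) A(1) B unfolding abs_cont_def by blast
  qed
qed

text \<open>A measure \<open>\<nu> \<ll> Q\<close> living on \<open>D\<close> only sees \<open>f\<close> on \<open>D\<close>, where \<open>f\<close> agrees with the density
  \<open>g\<close> representing \<open>\<Lambda>\<close> on \<open>L\<^sup>1(Q)\<close>.\<close>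

lemma functional_eq_signed_integral_on:
  assumes sm: "signed_measure M \<nu>" and Q: "pos_measure M Q" and ac: "abs_cont M \<nu> Q"
    and D: "D \<in> sets M" and conc: "\<And>B. B \<in> sets M \<Longrightarrow> \<nu> B = \<nu> (D \<inter> B)"
    and f[measurable]: "f \<in> borel_measurable M" and fC: "\<And>x. \<bar>f x\<bar> \<le> C"
    and g[measurable]: "g \<in> borel_measurable M"
    and fg: "AE x in to_measure M Q. x \<in> D \<longrightarrow> f x = g x"
    and \<Lambda>: "\<And>h. integrable (to_measure M Q) h \<Longrightarrow> \<Lambda> (signed_density M Q h) = (\<integral>x. g x * h x \<partial>to_measure M Q)"
  shows "\<Lambda> \<nu> = signed_integral M f \<nu>"
proof -
  obtain h where hd: "has_density M Q \<nu> h" using has_density_exists[OF sm Q ac] by blast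
  have h[measurable]: "h \<in> borel_measurable M" and hi: "integrable (to_measure M Q) h"
    using hd unfolding has_density_def by auto
  have \<nu>_eq: "\<nu> = signed_density M Q h"
    using hd signed_measure_notin_sets[OF sm] unfolding has_density_def signed_density_def by auto
  have "has_density M Q \<nu> (\<lambda>x. h x * indicator D x)"
    unfolding has_density_def
  proof (intro conjI ballI)
    show "integrable (to_measure M Q) (\<lambda>x. h x * indicator D x)"
      using hi D by (intro integrable_real_mult_indicator) auto
    fix B assume B: "B \<in> sets M"
    have "(\<integral>x. h x * indicator D x * indicator B x \<partial>to_measure M Q) = (\<integral>x. h x * indicator (D \<inter> B) x \<partial>to_measure M Q)"
      by (rule Bochner_Integration.integral_cong) (auto simp: indicator_def)
    thus "\<nu> B = (\<integral>x. h x * indicator D x * indicator B x \<partial>to_measure M Q)"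
      using hd D B conc[OF B] unfolding has_density_def by auto
  qed (use D in measurable)
  from has_density_unique[OF hd this] fg have "AE x in to_measure M Q. g x * h x = h x * f x"
    by eventually_elim (auto simp: indicator_def)
  hence "(\<integral>x. g x * h x \<partial>to_measure M Q) = (\<integral>x. h x * f x \<partial>to_measure M Q)"
    by (intro integral_cong_AE) simp_all
  also have "\<dots> = signed_integral M f \<nu>"
    using signed_integral_eq_density(1)[OF sm Q ac hd f, of C] fC by simp
  finally show ?thesis using \<Lambda>[OF hi] \<nu>_eq by simp
qed

lemma ca_dual_nonneg_bound:
  assumes "ca_dual M (mconv \<P>) \<Lambda>"
  obtains C where "0 \<le> C" "\<forall>\<mu>\<in>ca M (mconv \<P>). \<bar>\<Lambda> \<mu>\<bar> \<le> C * tv_norm M \<mu>"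
proof -
  obtain C where C: "\<forall>\<mu>\<in>ca M (mconv \<P>). \<bar>\<Lambda> \<mu>\<bar> \<le> C * tv_norm M \<mu>"
    using assms unfolding ca_dual_def by blast
  have "C * tv_norm M \<mu> \<le> max C 0 * tv_norm M \<mu>" if "\<mu> \<in> ca M (mconv \<P>)" for \<mu>
    using tv_norm_nonneg[of M \<mu>] that unfolding ca_def by (intro mult_right_mono) auto
  thus ?thesis using that[of "max C 0"] C by fastforce
qed

section \<open>Hahn localizations\<close>

text \<open>\<open>U r\<close> plays the role of the superlevel set \<open>{g > r}\<close> of the function to be recovered;
  the supremum only runs over rational \<open>r\<close>, which keeps the result measurable.\<close>

definition from_superlevels :: "real \<Rightarrow> (real \<Rightarrow> 'a set) \<Rightarrow> 'a \<Rightarrow> real" where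
  "from_superlevels C U x = (SUP r\<in>\<rat> \<inter> {-C..C}. if x \<in> U r then r else - C)"

context
  fixes C :: real and U :: "real \<Rightarrow> 'a set"
  assumes C: "0 \<le> C"
begin

lemma from_superlevels_bdd: "bdd_above ((\<lambda>r. if x \<in> U r then r else - C) ` (\<rat> \<inter> {-C..C}))"
  using C by (intro bdd_aboveI[of _ C]) auto

lemma from_superlevels_ge: "r \<in> \<rat> \<inter> {-C..C} \<Longrightarrow> (if x \<in> U r then r else - C) \<le> from_superlevels C U x"
  unfolding from_superlevels_def by (rule cSUP_upper[OF _ from_superlevels_bdd])

lemma abs_from_superlevels_le: "\<bar>from_superlevels C U x\<bar> \<le> C"
proof -
  have "0 \<in> \<rat> \<inter> {-C..C}" using C by auto
  hence "- C \<le> from_superlevels C U x" using from_superlevels_ge[of 0 x] C by (auto split: if_splits)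
  moreover have "from_superlevels C U x \<le> C"
    unfolding from_superlevels_def using C by (intro cSUP_least) auto
  ultimately show ?thesis by (simp add: abs_le_iff)
qed

lemma from_superlevels_measurable:
  "(\<And>r. U r \<in> sets M) \<Longrightarrow> from_superlevels C U \<in> borel_measurable M"
  unfolding from_superlevels_def
  by (rule borel_measurable_cSUP) (use from_superlevels_bdd in \<open>auto simp: countable_rat\<close>)

lemma from_superlevels_eq:
  assumes levels: "\<forall>r\<in>\<rat>. x \<in> U r \<longleftrightarrow> r < y" and y: "\<bar>y\<bar> \<le> C"
  shows "from_superlevels C U x = y"
proof (rule antisym)
  show "from_superlevels C U x \<le> y" unfolding from_superlevels_def
    using levels y C by (intro cSUP_least) (auto simp: abs_le_iff)
  show "y \<le> from_superlevels C U x"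
  proof (rule ccontr)
    assume "\<not> y \<le> from_superlevels C U x"
    then obtain r where r: "r \<in> \<rat>" "from_superlevels C U x < r" "r < y"
      using Rats_dense_in_real by (meson not_le)
    have "- C \<le> from_superlevels C U x" using abs_from_superlevels_le[of x] by simp
    hence "r \<in> \<rat> \<inter> {-C..C}" using r y by (auto simp: abs_le_iff)
    from from_superlevels_ge[OF this, of x] show False using levels r by auto
  qed
qed

end

text \<open>The Hahn-localizability of the paper: \<open>localize\<close> provides for every family of pieces
  \<open>E Q \<subseteq> S Q\<close> an essential union \<open>U\<close>.\<close>

locale localization =
  fixes M :: "'a measure" and \<Q> :: "('a set \<Rightarrow> real) set" and S :: "('a set \<Rightarrow> real) \<Rightarrow> 'a set"
  assumes prob_Q: "\<forall>Q\<in>\<Q>. prob_measure M Q"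
    and sets_S: "\<forall>Q\<in>\<Q>. S Q \<in> sets M"
    and measure_S: "\<forall>Q\<in>\<Q>. \<forall>R\<in>\<Q>. Q (S R) = (if Q = R then 1 else 0)"
    and localize: "\<forall>E. (\<forall>Q\<in>\<Q>. E Q \<in> sets M \<and> E Q \<subseteq> S Q) \<longrightarrow>
          (\<exists>U\<in>sets M. (\<forall>Q\<in>\<Q>. Q (E Q - U) = 0) \<and>
             (\<forall>F\<in>sets M. (\<forall>Q\<in>\<Q>. Q (E Q - F) = 0) \<longrightarrow> (\<forall>Q\<in>\<Q>. Q (U - F) = 0)))"
begin

lemma pos_measure_Q: "Q \<in> \<Q> \<Longrightarrow> pos_measure M Q"
  using prob_Q prob_measure_pos by blast

lemma essential_union_AE:
  assumes E: "\<forall>Q\<in>\<Q>. E Q \<in> sets M \<and> E Q \<subseteq> S Q"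
    and U: "U \<in> sets M" "\<forall>Q\<in>\<Q>. Q (E Q - U) = 0"
    and U_least: "\<forall>F\<in>sets M. (\<forall>Q\<in>\<Q>. Q (E Q - F) = 0) \<longrightarrow> (\<forall>Q\<in>\<Q>. Q (U - F) = 0)"
    and Q: "Q \<in> \<Q>"
  shows "AE x in to_measure M Q. x \<in> S Q \<longrightarrow> (x \<in> U \<longleftrightarrow> x \<in> E Q)"
proof -
  define F where "F = space M - (S Q - E Q)"
  have F: "F \<in> sets M" unfolding F_def using E sets_S Q by auto
  have "Q' (E Q' - F) = 0" if Q': "Q' \<in> \<Q>" for Q'
  proof (cases "Q' = Q")
    case True
    hence "E Q' - F = {}" unfolding F_def using True E Q sets.sets_into_space[of "E Q" M] by auto
    thus ?thesis using signed_measure_empty[OF pos_measure_signed[OF pos_measure_Q[OF Q']]] by metis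
  next
    case False
    have "E Q' - F \<subseteq> S Q" unfolding F_def using E Q' sets.sets_into_space[of "E Q'" M] by auto
    moreover have "E Q' - F \<in> sets M" using E Q' F by auto
    moreover have "Q' (S Q) = 0" using measure_S Q Q' False by auto
    ultimately show ?thesis using pos_measure_null_subset[OF pos_measure_Q[OF Q']] sets_S Q by blast
  qed
  hence "Q (U - F) = 0" using U_least F Q by blast
  hence "U - F \<in> null_sets (to_measure M Q)" using null_sets_to_measure[OF pos_measure_Q[OF Q]] U F by auto
  moreover have "E Q - U \<in> null_sets (to_measure M Q)"
    using null_sets_to_measure[OF pos_measure_Q[OF Q]] U E Q by auto
  ultimately have "AE x in to_measure M Q. x \<notin> U - F \<and> x \<notin> E Q - U"
    by (intro AE_conjI AE_not_in)
  thus ?thesis by eventually_elim (auto simp: F_def)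
qed

text \<open>Bounded functions \<open>g Q\<close> given separately on each \<open>S Q\<close> glue to a single function: its
  superlevel sets are the essential unions of those of the \<open>g Q\<close>.\<close>

lemma glue_bounded:
  fixes g :: "('a set \<Rightarrow> real) \<Rightarrow> 'a \<Rightarrow> real"
  assumes g: "\<And>Q. Q \<in> \<Q> \<Longrightarrow> g Q \<in> borel_measurable M" "\<And>Q x. Q \<in> \<Q> \<Longrightarrow> \<bar>g Q x\<bar> \<le> C"
    and C: "0 \<le> C"
  obtains f where "f \<in> borel_measurable M" "\<And>x. \<bar>f x\<bar> \<le> C"
    "\<And>Q. Q \<in> \<Q> \<Longrightarrow> AE x in to_measure M Q. x \<in> S Q \<longrightarrow> f x = g Q x"
proof -
  define E where "E r Q = S Q \<inter> {x \<in> space M. r < g Q x}" for r :: real and Q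
  have E: "\<forall>Q\<in>\<Q>. E r Q \<in> sets M \<and> E r Q \<subseteq> S Q" for r
    using g(1) sets_S unfolding E_def by auto
  have "\<forall>r. \<exists>U. U \<in> sets M \<and> (\<forall>Q\<in>\<Q>. Q (E r Q - U) = 0) \<and>
      (\<forall>F\<in>sets M. (\<forall>Q\<in>\<Q>. Q (E r Q - F) = 0) \<longrightarrow> (\<forall>Q\<in>\<Q>. Q (U - F) = 0))"
  proof
    fix r show "\<exists>U. U \<in> sets M \<and> (\<forall>Q\<in>\<Q>. Q (E r Q - U) = 0) \<and>
      (\<forall>F\<in>sets M. (\<forall>Q\<in>\<Q>. Q (E r Q - F) = 0) \<longrightarrow> (\<forall>Q\<in>\<Q>. Q (U - F) = 0))"
      using mp[OF spec[OF localize, of "E r"] E[of r]] by blast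
  qed
  from choice[OF this] obtain U where U: "\<And>r. U r \<in> sets M" "\<And>r. \<forall>Q\<in>\<Q>. Q (E r Q - U r) = 0"
    "\<And>r. \<forall>F\<in>sets M. (\<forall>Q\<in>\<Q>. Q (E r Q - F) = 0) \<longrightarrow> (\<forall>Q\<in>\<Q>. Q (U r - F) = 0)"
    by blast
  show ?thesis
  proof
    show "from_superlevels C U \<in> borel_measurable M" by (rule from_superlevels_measurable[OF C U(1)])
    show "\<bar>from_superlevels C U x\<bar> \<le> C" for x by (rule abs_from_superlevels_le[OF C])
    fix Q assume Q: "Q \<in> \<Q>"
    have "AE x in to_measure M Q. \<forall>r\<in>\<rat>. x \<in> S Q \<longrightarrow> (x \<in> U r \<longleftrightarrow> x \<in> E r Q)"
      using essential_union_AE[OF E U(1,2,3) Q] countable_rat by (intro AE_ball_countable') auto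
    moreover have "AE x in to_measure M Q. x \<in> space M" by (rule AE_space[of "to_measure M Q", simplified])
    ultimately show "AE x in to_measure M Q. x \<in> S Q \<longrightarrow> from_superlevels C U x = g Q x"
    proof eventually_elim
      case (elim x)
      thus ?case using from_superlevels_eq[OF C, of x U "g Q x"] g(2)[OF Q] by (auto simp: E_def)
    qed
  qed
qed

lemma null_if_disjoint_S:
  assumes Q: "Q \<in> \<Q>" and B: "B \<in> sets M" "B \<inter> S Q = {}"
  shows "Q B = 0"
proof -
  have S: "S Q \<in> sets M" using sets_S Q by blast
  have "Q B \<le> Q (space M - S Q)"
    using B S sets.sets_into_space[OF B(1)] by (intro pos_measure_mono[OF pos_measure_Q[OF Q]]) auto
  also have "\<dots> = Q (space M) - Q (S Q)"
    using sets.sets_into_space[OF S] by (intro signed_measure_Diff[OF pos_measure_signed[OF pos_measure_Q[OF Q]] sets.top S])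
  also have "\<dots> = 0" using Q prob_Q measure_S unfolding prob_measure_def by auto
  finally show ?thesis using pos_measure_nonneg[OF pos_measure_Q[OF Q], of B] by simp
qed

lemma abs_cont_restr_S:
  assumes \<Q>': "\<Q>' \<subseteq> \<Q>" "Q \<in> \<Q>'" and D: "D \<in> sets M" "D \<subseteq> S Q"
    and null: "\<And>A. A \<in> sets M \<Longrightarrow> \<forall>Q\<in>\<Q>'. Q A = 0 \<Longrightarrow> \<mu> A = 0"
  shows "abs_cont M (restr_measure M \<mu> D) Q"
  unfolding abs_cont_def
proof safe
  fix A B assume A: "A \<in> sets M" "Q A = 0" and B: "B \<in> sets M" "B \<subseteq> A"
  have "R (D \<inter> B) = 0" if R: "R \<in> \<Q>'" for R
  proof (cases "R = Q")
    case True
    have "pos_measure M Q" using \<Q>' pos_measure_Q by blast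
    thus ?thesis using pos_measure_null_subset[of M Q A "D \<inter> B"] True A D B by auto
  next
    case False
    have RQ: "R \<in> \<Q>" "Q \<in> \<Q>" using R \<Q>' by auto
    hence "R (S Q) = 0" using measure_S False by auto
    thus ?thesis using pos_measure_null_subset[OF pos_measure_Q[OF RQ(1)], of "S Q" "D \<inter> B"] sets_S RQ D B
      by auto
  qed
  thus "restr_measure M \<mu> D B = 0" using null[of "D \<inter> B"] D B by (simp add: restr_measure_def)
qed

end

locale hahn_localization = localization +
  fixes \<P> :: "('a set \<Rightarrow> real) set"
  assumes prob_P: "\<forall>P\<in>\<P>. prob_measure M P"
    and Q_dominated: "dominated M \<Q> \<P>" and P_dominated: "dominated M \<P> (sconv \<Q>)"
begin

lemma countable_cover:
  assumes \<mu>: "\<mu> \<in> ca M (mconv \<P>)"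
  obtains q :: "nat \<Rightarrow> 'a set \<Rightarrow> real" and D :: "nat \<Rightarrow> 'a set"
  where "\<And>k. q k \<in> \<Q>" "\<And>k. D k \<in> sets M" "\<And>k. D k \<subseteq> S (q k)" "disjoint_family D"
    "\<And>B. B \<in> sets M \<Longrightarrow> B \<subseteq> space M - (\<Union>k. D k) \<Longrightarrow> \<mu> B = 0"
    "\<And>k. abs_cont M (restr_measure M \<mu> (D k)) (q k)"
proof -
  obtain \<Q>' where \<Q>': "countable \<Q>'" "\<Q>' \<noteq> {}" "\<Q>' \<subseteq> \<Q>"
    and null: "\<And>A B. A \<in> sets M \<Longrightarrow> \<forall>Q\<in>\<Q>'. Q A = 0 \<Longrightarrow> B \<in> sets M \<Longrightarrow> B \<subseteq> A \<Longrightarrow> \<mu> B = 0"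
    using ca_mconv_null_family[OF P_dominated \<mu>] by blast
  define q where "q = from_nat_into \<Q>'"
  have q: "q k \<in> \<Q>'" for k unfolding q_def by (rule from_nat_into[OF \<Q>'(2)])
  have range_q: "range q = \<Q>'" unfolding q_def by (rule range_from_nat_into[OF \<Q>'(2,1)])
  have S_q: "range (\<lambda>k. S (q k)) \<subseteq> sets M" using sets_S q \<Q>'(3) by blast
  define D where "D = disjointed (\<lambda>k. S (q k))"
  have D: "D k \<in> sets M" "D k \<subseteq> S (q k)" for k
    using sets.range_disjointed_sets[OF S_q] unfolding D_def
    by (auto simp: disjointed_subset[of "\<lambda>k. S (q k)", simplified])
  show ?thesis
  proof (rule that[of q D])
    show "q k \<in> \<Q>" for k using q \<Q>'(3) by blast
    show "D k \<in> sets M" "D k \<subseteq> S (q k)" for k by (rule D)+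
    show "disjoint_family D" unfolding D_def by (rule disjoint_family_disjointed)
    fix B assume B: "B \<in> sets M" "B \<subseteq> space M - (\<Union>k. D k)"
    have "q k B = 0" for k
      using B q \<Q>'(3) by (intro null_if_disjoint_S) (auto simp: D_def UN_disjointed_eq)
    thus "\<mu> B = 0" using null[OF B(1) _ B(1) order_refl] range_q by blast
  next
    show "abs_cont M (restr_measure M \<mu> (D k)) (q k)" for k
      using \<Q>'(3) q D null by (intro abs_cont_restr_S) auto
  qed
qed

lemma local_representations:
  assumes \<Lambda>: "ca_dual M (mconv \<P>) \<Lambda>" and bound: "\<forall>\<mu>\<in>ca M (mconv \<P>). \<bar>\<Lambda> \<mu>\<bar> \<le> C * tv_norm M \<mu>"
    and C: "0 \<le> C"
  obtains g where "\<And>Q. Q \<in> \<Q> \<Longrightarrow> g Q \<in> borel_measurable M" "\<And>Q x. Q \<in> \<Q> \<Longrightarrow> \<bar>g Q x\<bar> \<le> C"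
    "\<And>Q h. Q \<in> \<Q> \<Longrightarrow> integrable (to_measure M Q) h \<Longrightarrow>
       \<Lambda> (signed_density M Q h) = (\<integral>x. g Q x * h x \<partial>to_measure M Q)"
proof -
  have "\<forall>Q\<in>\<Q>. \<exists>g. g \<in> borel_measurable M \<and> (\<forall>x. \<bar>g x\<bar> \<le> C) \<and>
      (\<forall>h. integrable (to_measure M Q) h \<longrightarrow> \<Lambda> (signed_density M Q h) = (\<integral>x. g x * h x \<partial>to_measure M Q))"
  proof
    fix Q assume Q: "Q \<in> \<Q>"
    then obtain P where "P \<in> \<P>" "abs_cont M Q P" using Q_dominated unfolding dominated_def by blast
    from ca_dual_density_representation[OF \<Lambda> bound C pos_measure_Q[OF Q] this]
    show "\<exists>g. g \<in> borel_measurable M \<and> (\<forall>x. \<bar>g x\<bar> \<le> C) \<and>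
      (\<forall>h. integrable (to_measure M Q) h \<longrightarrow> \<Lambda> (signed_density M Q h) = (\<integral>x. g x * h x \<partial>to_measure M Q))"
      by metis
  qed
  thus ?thesis using that by metis
qed

lemma ca_dual_eq_signed_integral:
  assumes \<Lambda>: "ca_dual M (mconv \<P>) \<Lambda>"
  obtains f where "f \<in> Linf M \<P>" "\<And>\<mu>. \<mu> \<in> ca M (mconv \<P>) \<Longrightarrow> \<Lambda> \<mu> = signed_integral M f \<mu>"
proof -
  obtain C where C: "0 \<le> C" and bound: "\<forall>\<mu>\<in>ca M (mconv \<P>). \<bar>\<Lambda> \<mu>\<bar> \<le> C * tv_norm M \<mu>"
    using ca_dual_nonneg_bound[OF \<Lambda>] by blast
  obtain g where g: "\<And>Q. Q \<in> \<Q> \<Longrightarrow> g Q \<in> borel_measurable M" "\<And>Q x. Q \<in> \<Q> \<Longrightarrow> \<bar>g Q x\<bar> \<le> C"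
    "\<And>Q h. Q \<in> \<Q> \<Longrightarrow> integrable (to_measure M Q) h \<Longrightarrow>
       \<Lambda> (signed_density M Q h) = (\<integral>x. g Q x * h x \<partial>to_measure M Q)"
    using local_representations[OF \<Lambda> bound C] by blast
  obtain f where f: "f \<in> borel_measurable M" "\<And>x. \<bar>f x\<bar> \<le> C"
    and fg: "\<And>Q. Q \<in> \<Q> \<Longrightarrow> AE x in to_measure M Q. x \<in> S Q \<longrightarrow> f x = g Q x"
    using glue_bounded[where g = g, OF g(1) g(2) C] by blast
  have fq: "qs M \<P> (\<lambda>x. \<bar>f x\<bar> \<le> C)"
    unfolding qs_def using f(2) prob_P signed_measure_empty[OF pos_measure_signed[OF prob_measure_pos]]
    by (intro bexI[of _ "{}"]) auto
  have fL: "f \<in> Linf M \<P>" unfolding Linf_def using f(1) fq by blast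
  show ?thesis
  proof (rule that[OF fL])
    fix \<mu> assume \<mu>: "\<mu> \<in> ca M (mconv \<P>)"
    have sm: "signed_measure M \<mu>" using \<mu> unfolding ca_def by auto
    obtain q :: "nat \<Rightarrow> 'a set \<Rightarrow> real" and D :: "nat \<Rightarrow> 'a set"
      where q: "\<And>k. q k \<in> \<Q>" and D: "\<And>k. D k \<in> sets M" "\<And>k. D k \<subseteq> S (q k)" "disjoint_family D"
      and null: "\<And>B. B \<in> sets M \<Longrightarrow> B \<subseteq> space M - (\<Union>k. D k) \<Longrightarrow> \<mu> B = 0"
      and ac: "\<And>k. abs_cont M (restr_measure M \<mu> (D k)) (q k)"
      using countable_cover[OF \<mu>] by blast
    have "\<Lambda> \<mu> - signed_integral M f \<mu> = 0"
    proof (rule bounded_additive_eq_0[where L = "\<lambda>\<nu>. \<Lambda> \<nu> - signed_integral M f \<nu>" and K = "C + C" and D = D,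
          OF sm restr_measure_ca[OF \<mu>]])
      fix \<nu>1 \<nu>2 assume \<nu>: "\<nu>1 \<in> ca M (mconv \<P>)" "\<nu>2 \<in> ca M (mconv \<P>)"
      have "\<Lambda> (\<lambda>A. 1 * \<nu>1 A + 1 * \<nu>2 A) = 1 * \<Lambda> \<nu>1 + 1 * \<Lambda> \<nu>2"
        using \<Lambda> \<nu> unfolding ca_dual_def by blast
      with signed_integral_lin_measure[OF prob_P fL \<nu>, of 1 1]
      show "\<Lambda> (\<lambda>A. \<nu>1 A + \<nu>2 A) - signed_integral M f (\<lambda>A. \<nu>1 A + \<nu>2 A) =
          (\<Lambda> \<nu>1 - signed_integral M f \<nu>1) + (\<Lambda> \<nu>2 - signed_integral M f \<nu>2)" by simp
    next
      fix \<nu> assume "\<nu> \<in> ca M (mconv \<P>)"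
      thus "\<bar>\<Lambda> \<nu> - signed_integral M f \<nu>\<bar> \<le> (C + C) * tv_norm M \<nu>"
        using bound signed_integral_abs_le_qs[OF prob_P f(1) fq] by (fastforce simp: distrib_right)
    next
      fix k
      have conc: "restr_measure M \<mu> (D k) B = restr_measure M \<mu> (D k) (D k \<inter> B)" if "B \<in> sets M" for B
        using that D(1) by (simp add: restr_measure_def Int_assoc)
      have fgk: "AE x in to_measure M (q k). x \<in> D k \<longrightarrow> f x = g (q k) x"
        using fg[OF q[of k]] D(2)[of k] by (auto elim!: eventually_mono)
      show "\<Lambda> (restr_measure M \<mu> (D k)) - signed_integral M f (restr_measure M \<mu> (D k)) = 0"
        using functional_eq_signed_integral_on[where \<nu> = "restr_measure M \<mu> (D k)" and D = "D k",
            OF signed_measure_restr[OF sm D(1)] pos_measure_Q[OF q] ac D(1) conc f g(1)[OF q] fgk g(3)[OF q]]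
        by simp
    qed (use C D null in auto)
    thus "\<Lambda> \<mu> = signed_integral M f \<mu>" by simp
  qed
qed

end

lemma hahn_localizable_imp_hahn_localization:
  assumes "\<forall>P\<in>\<P>. prob_measure M P" "hahn_localizable M \<P>"
  obtains \<Q> S where "hahn_localization M \<Q> S \<P>"
  using assms unfolding hahn_localizable_def hahn_localization_def localization_def hahn_localization_axioms_def
  by blast

theorem corollary3p5:
  fixes M :: "'a measure" and \<P> :: "('a set \<Rightarrow> real) set"
  assumes "\<forall>P\<in>\<P>. prob_measure M P"
    and "hahn_localizable M \<P>"
  shows "\<exists>\<Phi> :: ('a \<Rightarrow> real) \<Rightarrow> ('a set \<Rightarrow> real) \<Rightarrow> real.
     (\<forall>f\<in>Linf M \<P>. ca_dual M (mconv \<P>) (\<Phi> f)) \<and>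
     (\<forall>f\<in>Linf M \<P>. \<forall>g\<in>Linf M \<P>. \<forall>a b. \<forall>\<mu>\<in>ca M (mconv \<P>).
        \<Phi> (\<lambda>x. a * f x + b * g x) \<mu> = a * \<Phi> f \<mu> + b * \<Phi> g \<mu>) \<and>
     (\<forall>f\<in>Linf M \<P>. \<forall>g\<in>Linf M \<P>.
        (\<forall>\<mu>\<in>ca M (mconv \<P>). \<Phi> f \<mu> = \<Phi> g \<mu>) \<longleftrightarrow> qs M \<P> (\<lambda>x. f x = g x)) \<and>
     (\<forall>\<Lambda>. ca_dual M (mconv \<P>) \<Lambda> \<longrightarrow> (\<exists>f\<in>Linf M \<P>. \<forall>\<mu>\<in>ca M (mconv \<P>). \<Lambda> \<mu> = \<Phi> f \<mu>)) \<and>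
     (\<forall>f\<in>Linf M \<P>. dual_norm M (mconv \<P>) (\<Phi> f) = Linf_norm M \<P> f)"
proof (intro exI[of _ "signed_integral M"] conjI ballI allI impI)
  fix f g a b \<mu> assume "f \<in> Linf M \<P>" "g \<in> Linf M \<P>" "\<mu> \<in> ca M (mconv \<P>)"
  thus "signed_integral M (\<lambda>x. a * f x + b * g x) \<mu> = a * signed_integral M f \<mu> + b * signed_integral M g \<mu>"
    by (rule signed_integral_lin_fun[OF assms(1)])
next
  fix \<Lambda> assume "ca_dual M (mconv \<P>) \<Lambda>"
  moreover obtain \<Q> S where "hahn_localization M \<Q> S \<P>" using hahn_localizable_imp_hahn_localization[OF assms] .
  ultimately show "\<exists>f\<in>Linf M \<P>. \<forall>\<mu>\<in>ca M (mconv \<P>). \<Lambda> \<mu> = signed_integral M f \<mu>"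
    by (metis hahn_localization.ca_dual_eq_signed_integral)
qed (simp_all add: ca_dual_signed_integral[OF assms(1)] signed_integral_eq_iff_qs[OF assms(1)]
      dual_norm_signed_integral[OF assms(1)])

end
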